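(* Let $\mathcal H$ be the Hessian of an admissible Hamiltonian. Then, wherever $I-\varepsilon^2(\mathcal HJ(x))^2$ is invertible, there are unique functions $r_0(x,\varepsilon),\dots,r_{n-1}(x,\varepsilon)$ (rational in $x$ and $\varepsilon$) with $$\big(I-\varepsilon^2(\mathcal HJ(x))^2\big)^{-1}=\sum_{i=0}^{n-1}r_i(x,\varepsilon)A^i,$$ and they satisfy $\nabla_x r_{i-1}(x,\varepsilon)=A\,\nabla_x r_i(x,\varepsilon)$ for $i=1,\dots,n-1$.
   Context: Fix an integer $n\ge 2$. Points of $\mathbb R^{2n}$ are $x=(x_1,\dots,x_{2n})^{T}$; write $u=(x_1,\dots,x_n)^T$. Let $X(u)$ be the $n\times n$ matrix with entries $X(u)_{ij}=x_{k}$ where $k\in\{1,\dots,n\}$, $k\equiv i+j-1 \pmod n$, and let $J(x)=\begin{pmatrix}0&X(u)\\-X(u)&0\end{pmatrix}$. Let $\mathcal P$ be the $n\times n$ cyclic shift matrix ($\mathcal P_{i,i+1}=1$ for $1\le i\le n-1$, $\mathcal P_{n,1}=1$, all other entries $0$) and $A=\begin{pmatrix}\mathcal P&0\\0&\mathcal P\end{pmatrix}$; the matrices $I,A,\dots,A^{n-1}$ are linearly independent. An admissible Hamiltonian is a homogeneous quadratic form $H(x)=\tfrac12 x^T\mathcal H x$ with a constant symmetric matrix $\mathcal H=\nabla^2H$ satisfying $A\mathcal H=\mathcal H A^T$. *)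

theory Defs
  imports "HOL-Analysis.Analysis" "Jordan_Normal_Form.Matrix"
begin

text \<open>All indices are 0-based. X(u)_{ij} = x_k with k = (i+j) mod n (0-based),
  which is the paper's k = i+j-1 mod n in 1-based indexing.\<close>
definition Xmat :: "nat \<Rightarrow> real vec \<Rightarrow> real mat" where
  "Xmat n x = mat n n (\<lambda>(i,j). x $ ((i + j) mod n))"

definition Jmat :: "nat \<Rightarrow> real vec \<Rightarrow> real mat" where
  "Jmat n x = four_block_mat (0\<^sub>m n n) (Xmat n x) (- Xmat n x) (0\<^sub>m n n)"

definition Pshift :: "nat \<Rightarrow> real mat" where
  "Pshift n = mat n n (\<lambda>(i,j). if j = Suc i mod n then 1 else 0)"

definition Amat :: "nat \<Rightarrow> real mat" where
  "Amat n = four_block_mat (Pshift n) (0\<^sub>m n n) (0\<^sub>m n n) (Pshift n)"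

definition admissible_hessian :: "nat \<Rightarrow> real mat \<Rightarrow> bool" where
  "admissible_hessian n H \<longleftrightarrow> H \<in> carrier_mat (2*n) (2*n) \<and> transpose_mat H = H
     \<and> Amat n * H = H * transpose_mat (Amat n)"

definition Mmat :: "nat \<Rightarrow> real mat \<Rightarrow> real vec \<Rightarrow> real \<Rightarrow> real mat" where
  "Mmat n H x eps = 1\<^sub>m (2*n) - (eps^2) \<cdot>\<^sub>m ((H * Jmat n x) * (H * Jmat n x))"

definition is_inverse_of :: "real mat \<Rightarrow> real mat \<Rightarrow> bool" where
  "is_inverse_of B M \<longleftrightarrow> inverts_mat M B \<and> inverts_mat B M"

definition pow_comb :: "(nat \<Rightarrow> real) \<Rightarrow> real mat \<Rightarrow> nat \<Rightarrow> real mat" where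
  "pow_comb c B m = mat (dim_row B) (dim_col B) (\<lambda>ij. \<Sum>i<m. c i * (B ^\<^sub>m i) $$ ij)"

definition has_gradient :: "(real vec \<Rightarrow> real) \<Rightarrow> nat \<Rightarrow> real vec \<Rightarrow> real vec \<Rightarrow> bool" where
  "has_gradient f m x g \<longleftrightarrow> dim_vec g = m \<and>
     (\<forall>k<m. ((\<lambda>t. f (x + t \<cdot>\<^sub>v unit_vec m k)) has_real_derivative (g $ k)) (at 0))"

end

theory Submission
  imports Defs "Jordan_Normal_Form.Determinant"
begin

text \<open>
  Admissibility means that \<open>H\<close> has the block form \<open>[[K1, K2], [K2, K4]]\<close> with anticirculant blocks
  (\<open>P K = K P\<^sup>T\<close>), and \<open>X(u)\<close> is anticirculant as well. A product of two anticirculant matrices is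
  circulant (it commutes with \<open>P\<close>), and circulant matrices commute with each other. Hence
  \<open>HJ(x) = [[-a, b], [-c, a]]\<close> with commuting circulant \<open>a, b, c\<close>, so \<open>(HJ(x))\<^sup>2\<close> and
  \<open>M = I - \<epsilon>\<^sup>2 (HJ(x))\<^sup>2\<close> are block diagonal with a single circulant block \<open>C\<close>. The inverse
  \<open>diag(C\<^sup>-\<^sup>1, C\<^sup>-\<^sup>1)\<close> is again circulant, i.e. equal to \<open>\<Sum> r\<^sub>i A\<^sup>i\<close> where \<open>r\<^sub>i\<close> is the
  \<open>i\<close>-th entry of the first row of \<open>C\<^sup>-\<^sup>1\<close>, and these coefficients are unique.

  The partial derivative of \<open>C\<^sup>-\<^sup>1\<close> in \<open>x\<^sub>k\<close> is \<open>\<epsilon>\<^sup>2 C\<^sup>-\<^sup>1 (\<partial>\<^sub>k D) C\<^sup>-\<^sup>1\<close>, where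
  \<open>D = a\<^sup>2 - b c\<close>. Since \<open>X(e\<^sub>k\<^sub>+\<^sub>1) = X(e\<^sub>k) P\<close> and all circulant factors commute with \<open>P\<close>,
  \<open>\<partial>\<^sub>k\<^sub>+\<^sub>1 C\<^sup>-\<^sup>1 = (\<partial>\<^sub>k C\<^sup>-\<^sup>1) P\<close>; right multiplication by \<open>P\<close> shifts the first row, which gives
  \<open>\<partial>\<^sub>k\<^sub>+\<^sub>1 r\<^sub>i = \<partial>\<^sub>k r\<^sub>i\<^sub>-\<^sub>1\<close>, i.e. \<open>\<nabla> r\<^sub>i\<^sub>-\<^sub>1 = A \<nabla> r\<^sub>i\<close>. The last \<open>n\<close> coordinates do not enter.
\<close>

section \<open>Residues and the cyclic shift\<close>

definition residue :: "nat \<Rightarrow> int \<Rightarrow> nat" where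
  "residue n k = nat (k mod int n)"

lemma residue_less: "0 < n \<Longrightarrow> residue n k < n"
  by (simp add: residue_def nat_less_iff)

lemma of_nat_residue: "0 < n \<Longrightarrow> int (residue n k) = k mod int n"
  by (simp add: residue_def)

lemma residue_eq_iff: "l < n \<Longrightarrow> residue n k = l \<longleftrightarrow> k mod int n = int l"
  by (auto simp: residue_def)

lemma eq_mod_iff_dvd:
  fixes y z m :: int
  assumes "0 \<le> y" "y < m"
  shows "y = z mod m \<longleftrightarrow> m dvd z - y"
  using assms mod_eq_dvd_iff[of z m y] by auto

lemma add_mod_eq_iff:
  assumes "a < n" "b < n" "l < n"
  shows "b = (a + l) mod n \<longleftrightarrow> l = residue n (int b - int a)"
proof -
  have "b = (a + l) mod n \<longleftrightarrow> int b = (int a + int l) mod int n"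
    by (simp flip: of_nat_add of_nat_mod)
  also have "\<dots> \<longleftrightarrow> int n dvd - ((int b - int a) - int l)"
    using assms by (simp add: eq_mod_iff_dvd algebra_simps)
  also have "\<dots> \<longleftrightarrow> l = residue n (int b - int a)"
    using assms by (simp only: dvd_minus_iff eq_mod_iff_dvd[symmetric]) (auto simp: residue_def)
  finally show ?thesis .
qed

lemma Suc_mod_eq_iff:
  assumes "l < n" "j < n"
  shows "j = Suc l mod n \<longleftrightarrow> l = residue n (int j - 1)"
proof -
  have "j = Suc l mod n \<longleftrightarrow> int j = (int l + 1) mod int n"
    by (metis of_nat_Suc of_nat_eq_iff of_nat_mod add.commute)
  also have "\<dots> \<longleftrightarrow> int n dvd - ((int j - 1) - int l)"
    using assms by (simp add: eq_mod_iff_dvd algebra_simps)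
  also have "\<dots> \<longleftrightarrow> l = residue n (int j - 1)"
    using assms by (simp only: dvd_minus_iff eq_mod_iff_dvd[symmetric]) (auto simp: residue_def)
  finally show ?thesis .
qed

lemma index_mult_mat_sum:
  assumes "A \<in> carrier_mat nr m" "B \<in> carrier_mat m nc" "i < nr" "j < nc"
  shows "(A * B) $$ (i,j) = (\<Sum>l<m. A $$ (i,l) * B $$ (l,j))"
  using assms by (auto simp: scalar_prod_def atLeast0LessThan intro!: sum.cong)

lemma Pshift_carrier [simp]: "Pshift n \<in> carrier_mat n n"
  and Pshift_dims [simp]: "dim_row (Pshift n) = n" "dim_col (Pshift n) = n"
  by (simp_all add: Pshift_def)

lemma index_Pshift: "i < n \<Longrightarrow> j < n \<Longrightarrow> Pshift n $$ (i,j) = (if j = Suc i mod n then 1 else 0)"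
  by (simp add: Pshift_def)

lemma Suc_residue_pred: "j < n \<Longrightarrow> Suc (residue n (int j - 1)) mod n = j"
  using Suc_mod_eq_iff[of "residue n (int j - 1)" n j] by (simp add: residue_less)

lemma index_Pshift_mult:
  assumes "Y \<in> carrier_mat n nc" "i < n" "j < nc"
  shows "(Pshift n * Y) $$ (i,j) = Y $$ (Suc i mod n, j)"
proof -
  have "(Pshift n * Y) $$ (i,j) = (\<Sum>l<n. if l = Suc i mod n then Y $$ (l,j) else 0)"
    unfolding index_mult_mat_sum[OF Pshift_carrier assms] by (rule sum.cong) (auto simp: index_Pshift assms)
  also have "\<dots> = Y $$ (Suc i mod n, j)"
    using assms by simp
  finally show ?thesis .
qed

lemma index_mult_Pshift:
  assumes "Y \<in> carrier_mat nr n" "i < nr" "j < n"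
  shows "(Y * Pshift n) $$ (i,j) = Y $$ (i, residue n (int j - 1))"
proof -
  have "(Y * Pshift n) $$ (i,j) = (\<Sum>l<n. if l = residue n (int j - 1) then Y $$ (i,l) else 0)"
    unfolding index_mult_mat_sum[OF assms(1) Pshift_carrier assms(2,3)]
    by (rule sum.cong) (auto simp: index_Pshift Suc_mod_eq_iff assms)
  also have "\<dots> = Y $$ (i, residue n (int j - 1))"
    using assms by (simp add: residue_less)
  finally show ?thesis .
qed

lemma index_mult_transpose_Pshift:
  assumes "Y \<in> carrier_mat nr n" "i < nr" "j < n"
  shows "(Y * transpose_mat (Pshift n)) $$ (i,j) = Y $$ (i, Suc j mod n)"
proof -
  have "(Y * transpose_mat (Pshift n)) $$ (i,j) = (\<Sum>l<n. if l = Suc j mod n then Y $$ (i,l) else 0)"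
    unfolding index_mult_mat_sum[OF assms(1) transpose_carrier_mat[THEN iffD2, OF Pshift_carrier] assms(2,3)]
    by (rule sum.cong) (auto simp: index_Pshift assms)
  also have "\<dots> = Y $$ (i, Suc j mod n)"
    using assms by simp
  finally show ?thesis .
qed

lemma transpose_Pshift_mult_Pshift: "transpose_mat (Pshift n) * Pshift n = 1\<^sub>m n"
proof (rule eq_matI)
  fix i j assume "i < dim_row (1\<^sub>m n :: real mat)" "j < dim_col (1\<^sub>m n :: real mat)"
  then have i: "i < n" and j: "j < n" by auto
  then have "(transpose_mat (Pshift n) * Pshift n) $$ (i,j) = transpose_mat (Pshift n) $$ (i, residue n (int j - 1))"
    by (intro index_mult_Pshift[of _ n]) auto
  also have "\<dots> = Pshift n $$ (residue n (int j - 1), i)"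
    using i by (simp add: residue_less)
  also have "\<dots> = 1\<^sub>m n $$ (i,j)"
    using i j by (auto simp: index_Pshift residue_less Suc_residue_pred)
  finally show "(transpose_mat (Pshift n) * Pshift n) $$ (i,j) = 1\<^sub>m n $$ (i,j)" .
qed auto

lemma index_Pshift_power:
  assumes "a < n" "b < n"
  shows "(Pshift n ^\<^sub>m l) $$ (a,b) = (if b = (a + l) mod n then 1 else 0)"
  using assms(2)
proof (induction l arbitrary: b)
  case 0
  then show ?case using assms(1) by simp
next
  case (Suc l)
  have n: "0 < n" using assms by auto
  have "(Pshift n ^\<^sub>m Suc l) $$ (a,b) = (Pshift n ^\<^sub>m l) $$ (a, residue n (int b - 1))"
    unfolding pow_mat.simps using Suc.prems assms(1) by (intro index_mult_Pshift[of _ n]) auto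
  also have "\<dots> = (if residue n (int b - 1) = (a + l) mod n then 1 else 0)"
    using Suc.IH n by (simp add: residue_less)
  also have "residue n (int b - 1) = (a + l) mod n \<longleftrightarrow> b = (a + Suc l) mod n"
    using Suc_mod_eq_iff[of "(a + l) mod n" n b] Suc.prems n by (auto simp: mod_Suc_eq)
  finally show ?case .
qed

section \<open>Circulant and anticirculant matrices\<close>

definition circulant :: "nat \<Rightarrow> real mat \<Rightarrow> bool" where
  "circulant n C \<longleftrightarrow> C \<in> carrier_mat n n \<and> Pshift n * C = C * Pshift n"

definition anticirculant :: "nat \<Rightarrow> real mat \<Rightarrow> bool" where
  "anticirculant n K \<longleftrightarrow> K \<in> carrier_mat n n \<and> Pshift n * K = K * transpose_mat (Pshift n)"

lemma circulant_carrier: "circulant n C \<Longrightarrow> C \<in> carrier_mat n n"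
  and anticirculant_carrier: "anticirculant n K \<Longrightarrow> K \<in> carrier_mat n n"
  by (simp_all add: circulant_def anticirculant_def)

lemma transpose_Pshift_mult_anticirculant:
  assumes "anticirculant n K"
  shows "transpose_mat (Pshift n) * K = K * Pshift n"
proof -
  have K: "K \<in> carrier_mat n n" and PK: "Pshift n * K = K * transpose_mat (Pshift n)"
    using assms by (auto simp: anticirculant_def)
  let ?P = "Pshift n" and ?Q = "transpose_mat (Pshift n)"
  have Q: "?Q \<in> carrier_mat n n" by simp
  have "K * ?P = (?Q * ?P) * K * ?P"
    using K by (simp add: transpose_Pshift_mult_Pshift)
  also have "\<dots> = ?Q * (?P * K) * ?P"
    by (simp only: assoc_mult_mat[OF Q Pshift_carrier K])
  also have "\<dots> = ?Q * (K * (?Q * ?P))"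
    using K by (simp add: PK assoc_mult_mat[of _ n n _ n _ n])
  also have "\<dots> = ?Q * K"
    using K Q by (simp add: transpose_Pshift_mult_Pshift)
  finally show ?thesis by simp
qed

lemma anticirculant_mult:
  assumes K: "anticirculant n K" and L: "anticirculant n L"
  shows "circulant n (K * L)"
proof -
  have Kc: "K \<in> carrier_mat n n" and PK: "Pshift n * K = K * transpose_mat (Pshift n)"
    and Lc: "L \<in> carrier_mat n n" using K L by (auto simp: anticirculant_def)
  have "Pshift n * (K * L) = (Pshift n * K) * L"
    using Kc Lc by (simp add: assoc_mult_mat[of _ n n _ n _ n])
  also have "\<dots> = K * (transpose_mat (Pshift n) * L)"
    using Kc Lc by (simp add: PK assoc_mult_mat[of _ n n _ n _ n])
  also have "\<dots> = K * L * Pshift n"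
    using Kc Lc by (simp add: transpose_Pshift_mult_anticirculant[OF L] assoc_mult_mat[of _ n n _ n _ n])
  finally show ?thesis using Kc Lc by (simp add: circulant_def)
qed

lemma index_circulant:
  assumes C: "circulant n C" and "i < n" "j < n"
  shows "C $$ (i,j) = C $$ (0, residue n (int j - int i))"
  using assms(2,3)
proof (induction i arbitrary: j)
  case 0
  then show ?case by (simp add: residue_def)
next
  case (Suc i)
  have n: "0 < n" using Suc by auto
  have Cc: "C \<in> carrier_mat n n" and PC: "Pshift n * C = C * Pshift n"
    using C by (auto simp: circulant_def)
  have "C $$ (Suc i, j) = (Pshift n * C) $$ (i, j)"
    using Suc.prems by (simp add: index_Pshift_mult[OF Cc])
  also have "\<dots> = C $$ (i, residue n (int j - 1))"
    using Suc.prems by (simp add: PC index_mult_Pshift[OF Cc])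
  also have "\<dots> = C $$ (0, residue n (int (residue n (int j - 1)) - int i))"
    using Suc n by (simp add: residue_less)
  also have "\<dots> = C $$ (0, residue n (int j - int (Suc i)))"
    using n by (simp add: of_nat_residue residue_def mod_diff_left_eq algebra_simps)
  finally show ?case .
qed

lemma circulant_mult_commute:
  assumes C: "circulant n C" and D: "circulant n D"
  shows "C * D = D * C"
proof (rule eq_matI)
  have Cc: "C \<in> carrier_mat n n" and Dc: "D \<in> carrier_mat n n"
    using C D by (auto simp: circulant_def)
  fix i j assume "i < dim_row (D * C)" "j < dim_col (D * C)"
  then have i: "i < n" and j: "j < n" using Dc Cc by auto
  then have n: "0 < n" by simp
  define \<phi> where "\<phi> l = residue n (int i + int j - int l)" for l
  have \<phi>: "\<phi> l \<in> {..<n}" "\<phi> (\<phi> l) = l" if "l \<in> {..<n}" for l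
    using that n by (auto simp: \<phi>_def residue_less of_nat_residue residue_eq_iff mod_diff_right_eq)
  have "(C * D) $$ (i,j) = (\<Sum>l<n. C $$ (i,l) * D $$ (l,j))"
    by (rule index_mult_mat_sum[OF Cc Dc i j])
  also have "\<dots> = (\<Sum>l<n. D $$ (i,l) * C $$ (l,j))"
  proof (rule sum.reindex_bij_witness[of _ \<phi> \<phi>])
    fix l assume l: "l \<in> {..<n}"
    show "\<phi> (\<phi> l) = l" "\<phi> l \<in> {..<n}" using \<phi>[OF l] by auto
    have "residue n (int (\<phi> l) - int i) = residue n (int j - int l)"
      and "residue n (int j - int (\<phi> l)) = residue n (int l - int i)"
      using n by (simp_all add: \<phi>_def of_nat_residue residue_def mod_diff_left_eq mod_diff_right_eq)
    then show "D $$ (i, \<phi> l) * C $$ (\<phi> l, j) = C $$ (i, l) * D $$ (l, j)"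
      using i j l \<phi>[OF l]
      by (simp add: index_circulant[OF C, of i l] index_circulant[OF C, of "\<phi> l" j]
          index_circulant[OF D, of i "\<phi> l"] index_circulant[OF D, of l j])
  qed (use \<phi> in auto)
  also have "\<dots> = (D * C) $$ (i,j)"
    by (rule index_mult_mat_sum[OF Dc Cc i j, symmetric])
  finally show "(C * D) $$ (i,j) = (D * C) $$ (i,j)" .
qed (use assms in \<open>auto simp: circulant_def\<close>)

lemma circulant_one: "circulant n (1\<^sub>m n)"
  by (simp add: circulant_def)

lemma circulant_mult:
  assumes C: "circulant n C" and D: "circulant n D"
  shows "circulant n (C * D)"
proof -
  have Cc: "C \<in> carrier_mat n n" and Dc: "D \<in> carrier_mat n n"
    using C D by (auto simp: circulant_def)
  have "Pshift n * (C * D) = (Pshift n * C) * D"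
    using Cc Dc by (simp add: assoc_mult_mat[of _ n n _ n _ n])
  also have "\<dots> = C * (Pshift n * D)"
    using C Cc Dc by (simp add: circulant_def assoc_mult_mat[of _ n n _ n _ n])
  also have "\<dots> = C * D * Pshift n"
    using D Cc Dc by (simp add: circulant_def assoc_mult_mat[of _ n n _ n _ n])
  finally show ?thesis
    using Cc Dc by (simp add: circulant_def)
qed

lemma circulant_minus:
  assumes C: "circulant n C" and D: "circulant n D"
  shows "circulant n (C - D)"
proof -
  have Cc: "C \<in> carrier_mat n n" and Dc: "D \<in> carrier_mat n n"
    using C D by (auto simp: circulant_def)
  have "Pshift n * (C - D) = Pshift n * C - Pshift n * D"
    using Cc Dc by (simp add: mult_minus_distrib_mat[of _ n n])
  also have "\<dots> = (C - D) * Pshift n"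
    using C D Cc Dc by (simp add: circulant_def minus_mult_distrib_mat[OF Cc Dc Pshift_carrier])
  finally show ?thesis
    using Cc Dc by (simp add: circulant_def minus_carrier_mat)
qed

lemma circulant_smult:
  assumes C: "circulant n C"
  shows "circulant n (a \<cdot>\<^sub>m C)"
proof -
  have Cc: "C \<in> carrier_mat n n"
    using C by (simp add: circulant_def)
  have "Pshift n * (a \<cdot>\<^sub>m C) = (a \<cdot>\<^sub>m C) * Pshift n"
    using C Cc by (simp add: circulant_def mult_smult_distrib[of _ n n] mult_smult_assoc_mat[OF Cc Pshift_carrier])
  then show ?thesis
    using Cc by (simp add: circulant_def)
qed

lemma circulant_inverse:
  assumes C: "circulant n C" and E: "E \<in> carrier_mat n n"
    and EC: "E * C = 1\<^sub>m n" and CE: "C * E = 1\<^sub>m n"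
  shows "circulant n E"
proof -
  have Cc: "C \<in> carrier_mat n n" and PC: "Pshift n * C = C * Pshift n"
    using C by (auto simp: circulant_def)
  have "E * Pshift n = E * (Pshift n * (C * E))"
    using E by (simp add: CE right_mult_one_mat[OF Pshift_carrier])
  also have "\<dots> = E * (Pshift n * C) * E"
    using E Cc by (simp add: assoc_mult_mat[of _ n n _ n _ n] mult_carrier_mat[of _ n n _ n])
  also have "\<dots> = (E * C) * Pshift n * E"
    using E Cc by (simp add: PC assoc_mult_mat[of _ n n _ n _ n] mult_carrier_mat[of _ n n _ n])
  also have "\<dots> = Pshift n * E"
    using E by (simp add: EC)
  finally show ?thesis
    using E by (simp add: circulant_def)
qed

lemma index_anticirculant:
  assumes K: "anticirculant n K" and "i < n" "j < n"
  shows "K $$ (i,j) = K $$ (0, (i + j) mod n)"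
  using assms(2,3)
proof (induction i arbitrary: j)
  case 0
  then show ?case by simp
next
  case (Suc i)
  have Kc: "K \<in> carrier_mat n n" and PK: "Pshift n * K = K * transpose_mat (Pshift n)"
    using K by (auto simp: anticirculant_def)
  have "K $$ (Suc i, j) = (Pshift n * K) $$ (i, j)"
    using Suc.prems by (simp add: index_Pshift_mult[OF Kc])
  also have "\<dots> = K $$ (i, Suc j mod n)"
    unfolding PK by (rule index_mult_transpose_Pshift[OF Kc]) (use Suc.prems in auto)
  also have "\<dots> = K $$ (0, (i + Suc j mod n) mod n)"
    using Suc by simp
  also have "(i + Suc j mod n) mod n = (Suc i + j) mod n"
    by (simp add: mod_add_right_eq)
  finally show ?case .
qed

lemma anticirculant_transpose:
  assumes K: "anticirculant n K"
  shows "transpose_mat K = K"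
proof -
  have Kc: "K \<in> carrier_mat n n"
    using K by (simp add: anticirculant_def)
  show ?thesis
  proof (rule eq_matI)
    fix i j assume "i < dim_row K" "j < dim_col K"
    then show "transpose_mat K $$ (i,j) = K $$ (i,j)"
      using Kc index_anticirculant[OF K, of i j] index_anticirculant[OF K, of j i]
      by (simp add: add.commute)
  qed (use Kc in auto)
qed

lemma Xmat_carrier [simp]: "Xmat n x \<in> carrier_mat n n"
  and Xmat_dims [simp]: "dim_row (Xmat n x) = n" "dim_col (Xmat n x) = n"
  by (simp_all add: Xmat_def)

lemma Xmat_anticirculant: "anticirculant n (Xmat n x)"
proof -
  have "Pshift n * Xmat n x = Xmat n x * transpose_mat (Pshift n)"
  proof (rule eq_matI)
    fix i j assume "i < dim_row (Xmat n x * transpose_mat (Pshift n))"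
      "j < dim_col (Xmat n x * transpose_mat (Pshift n))"
    then have i: "i < n" and j: "j < n" by auto
    then show "(Pshift n * Xmat n x) $$ (i,j) = (Xmat n x * transpose_mat (Pshift n)) $$ (i,j)"
      using index_Pshift_mult[OF Xmat_carrier i j] index_mult_transpose_Pshift[OF Xmat_carrier i j]
      by (simp add: Xmat_def mod_simps)
  qed auto
  then show ?thesis
    by (simp add: anticirculant_def)
qed

definition circ_mat :: "nat \<Rightarrow> (nat \<Rightarrow> real) \<Rightarrow> real mat" where
  "circ_mat n c = mat n n (\<lambda>(a,b). c (residue n (int b - int a)))"

lemma circ_mat_carrier [simp]: "circ_mat n c \<in> carrier_mat n n"
  and circ_mat_dims [simp]: "dim_row (circ_mat n c) = n" "dim_col (circ_mat n c) = n"
  by (simp_all add: circ_mat_def)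

lemma index_circ_mat_first_row: "i < n \<Longrightarrow> circ_mat n c $$ (0,i) = c i"
  by (simp add: circ_mat_def residue_def)

lemma circ_mat_first_row:
  assumes "circulant n C"
  shows "circ_mat n (\<lambda>l. C $$ (0,l)) = C"
proof (rule eq_matI)
  fix i j assume "i < dim_row C" "j < dim_col C"
  then show "circ_mat n (\<lambda>l. C $$ (0,l)) $$ (i,j) = C $$ (i,j)"
    using circulant_carrier[OF assms] index_circulant[OF assms, of i j] by (simp add: circ_mat_def)
qed (use circulant_carrier[OF assms] in auto)

lemma sum_Pshift_power_index:
  assumes "a < n" "b < n"
  shows "(\<Sum>l<n. c l * (Pshift n ^\<^sub>m l) $$ (a,b)) = c (residue n (int b - int a))"
proof -
  have "(\<Sum>l<n. c l * (Pshift n ^\<^sub>m l) $$ (a,b))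
      = (\<Sum>l<n. if l = residue n (int b - int a) then c l else 0)"
    by (rule sum.cong) (auto simp: index_Pshift_power add_mod_eq_iff assms)
  also have "\<dots> = c (residue n (int b - int a))"
    using assms by (simp add: residue_less)
  finally show ?thesis .
qed

lemma Amat_carrier [simp]: "Amat n \<in> carrier_mat (2*n) (2*n)"
  unfolding Amat_def carrier_mat_def by simp

lemma Amat_power: "Amat n ^\<^sub>m l = four_block_mat (Pshift n ^\<^sub>m l) (0\<^sub>m n n) (0\<^sub>m n n) (Pshift n ^\<^sub>m l)"
  unfolding Amat_def by (rule pow_four_block_mat) auto

lemma pow_comb_Amat:
  "pow_comb c (Amat n) n = four_block_mat (circ_mat n c) (0\<^sub>m n n) (0\<^sub>m n n) (circ_mat n c)"
proof (rule eq_matI)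
  fix i j assume "i < dim_row (four_block_mat (circ_mat n c) (0\<^sub>m n n) (0\<^sub>m n n) (circ_mat n c))"
    "j < dim_col (four_block_mat (circ_mat n c) (0\<^sub>m n n) (0\<^sub>m n n) (circ_mat n c))"
  then have i: "i < n + n" and j: "j < n + n" by auto
  have "pow_comb c (Amat n) n $$ (i,j) = (\<Sum>l<n. c l * (Amat n ^\<^sub>m l) $$ (i,j))"
    using i j by (simp add: pow_comb_def carrier_matD[OF Amat_carrier])
  also have "\<dots> = four_block_mat (circ_mat n c) (0\<^sub>m n n) (0\<^sub>m n n) (circ_mat n c) $$ (i,j)"
  proof (cases "i < n \<longleftrightarrow> j < n")
    case True
    define a b where "a = (if i < n then i else i - n)" and "b = (if j < n then j else j - n)"
    have a: "a < n" and b: "b < n" using i j by (auto simp: a_def b_def)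
    have "(\<Sum>l<n. c l * (Amat n ^\<^sub>m l) $$ (i,j)) = (\<Sum>l<n. c l * (Pshift n ^\<^sub>m l) $$ (a,b))"
      using True i j by (intro sum.cong) (auto simp: Amat_power a_def b_def)
    also have "\<dots> = c (residue n (int b - int a))"
      by (rule sum_Pshift_power_index[OF a b])
    also have "\<dots> = four_block_mat (circ_mat n c) (0\<^sub>m n n) (0\<^sub>m n n) (circ_mat n c) $$ (i,j)"
      using True i j by (auto simp: circ_mat_def a_def b_def of_nat_diff)
    finally show ?thesis .
  next
    case False
    then show ?thesis
      using i j by (auto simp: Amat_power intro!: sum.neutral)
  qed
  finally show "pow_comb c (Amat n) n $$ (i,j) = \<dots>" .
qed (auto simp: pow_comb_def carrier_matD[OF Amat_carrier])

section \<open>Entrywise limits and derivatives of matrix-valued functions\<close>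

definition tendsto_mat :: "('b \<Rightarrow> real mat) \<Rightarrow> real mat \<Rightarrow> 'b filter \<Rightarrow> bool" where
  "tendsto_mat F L net \<longleftrightarrow> (\<forall>t. F t \<in> carrier_mat (dim_row L) (dim_col L)) \<and>
     (\<forall>i<dim_row L. \<forall>j<dim_col L. ((\<lambda>t. F t $$ (i,j)) \<longlongrightarrow> L $$ (i,j)) net)"

definition has_mat_derivative :: "(real \<Rightarrow> real mat) \<Rightarrow> real mat \<Rightarrow> real \<Rightarrow> bool" where
  "has_mat_derivative F F' t0 \<longleftrightarrow> (\<forall>t. F t \<in> carrier_mat (dim_row F') (dim_col F')) \<and>
     (\<forall>i<dim_row F'. \<forall>j<dim_col F'. ((\<lambda>t. F t $$ (i,j)) has_real_derivative F' $$ (i,j)) (at t0))"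

lemma tendsto_mat_const: "tendsto_mat (\<lambda>t. L) L net"
  by (simp add: tendsto_mat_def)

lemma tendsto_mat_carrier: "tendsto_mat F L net \<Longrightarrow> F t \<in> carrier_mat (dim_row L) (dim_col L)"
  and tendsto_mat_index: "tendsto_mat F L net \<Longrightarrow> i < dim_row L \<Longrightarrow> j < dim_col L \<Longrightarrow>
    ((\<lambda>t. F t $$ (i,j)) \<longlongrightarrow> L $$ (i,j)) net"
  by (simp_all add: tendsto_mat_def)

lemma tendsto_mat_mult:
  assumes F: "tendsto_mat F L net" and G: "tendsto_mat G M net" and LM: "dim_col L = dim_row M"
  shows "tendsto_mat (\<lambda>t. F t * G t) (L * M) net"
  unfolding tendsto_mat_def
proof (intro conjI allI impI)
  have Fc: "F t \<in> carrier_mat (dim_row L) (dim_row M)" and Gc: "G t \<in> carrier_mat (dim_row M) (dim_col M)" for t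
    using tendsto_mat_carrier[OF F, of t] tendsto_mat_carrier[OF G, of t] unfolding LM .
  have Lc: "L \<in> carrier_mat (dim_row L) (dim_row M)" and Mc: "M \<in> carrier_mat (dim_row M) (dim_col M)"
    using LM by (auto intro: carrier_matI)
  show "F t * G t \<in> carrier_mat (dim_row (L * M)) (dim_col (L * M))" for t
    using mult_carrier_mat[OF Fc Gc] by simp
  fix i j assume "i < dim_row (L * M)" "j < dim_col (L * M)"
  then have i: "i < dim_row L" and j: "j < dim_col M" by auto
  have "((\<lambda>t. \<Sum>l<dim_row M. F t $$ (i,l) * G t $$ (l,j)) \<longlongrightarrow> (\<Sum>l<dim_row M. L $$ (i,l) * M $$ (l,j))) net"
    using i j LM by (intro tendsto_sum tendsto_mult tendsto_mat_index[OF F] tendsto_mat_index[OF G]) auto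
  then show "((\<lambda>t. (F t * G t) $$ (i,j)) \<longlongrightarrow> (L * M) $$ (i,j)) net"
    unfolding index_mult_mat_sum[OF Fc Gc i j] index_mult_mat_sum[OF Lc Mc i j] .
qed

lemma tendsto_det:
  assumes F: "tendsto_mat F L net" and L: "L \<in> carrier_mat m m"
  shows "((\<lambda>t. det (F t)) \<longlongrightarrow> det L) net"
proof -
  have Fc: "F t \<in> carrier_mat m m" for t
    using tendsto_mat_carrier[OF F] L by auto
  have "((\<lambda>t. \<Sum>p\<in>{p. p permutes {0..<m}}. signof p * (\<Prod>i = 0..<m. F t $$ (i, p i)))
      \<longlongrightarrow> (\<Sum>p\<in>{p. p permutes {0..<m}}. signof p * (\<Prod>i = 0..<m. L $$ (i, p i)))) net"
  proof (intro tendsto_intros)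
    fix p i assume "p \<in> {p. p permutes {0..<m}}" and i: "i \<in> {0..<m}"
    then have "p i < m" using permutes_in_image by fastforce
    then show "((\<lambda>t. F t $$ (i, p i)) \<longlongrightarrow> L $$ (i, p i)) net"
      using tendsto_mat_index[OF F] L i by auto
  qed
  then show ?thesis
    unfolding det_def'[OF Fc] det_def'[OF L] .
qed

lemma tendsto_mat_delete:
  assumes F: "tendsto_mat F L net" and L: "L \<in> carrier_mat m m" and "a < m" "b < m"
  shows "tendsto_mat (\<lambda>t. mat_delete (F t) a b) (mat_delete L a b) net"
  unfolding tendsto_mat_def
proof (intro conjI allI impI)
  have Fc: "F t \<in> carrier_mat m m" for t
    using tendsto_mat_carrier[OF F] L by auto
  show "mat_delete (F t) a b \<in> carrier_mat (dim_row (mat_delete L a b)) (dim_col (mat_delete L a b))" for t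
    using mat_delete_carrier[OF Fc] L by auto
  fix i j assume "i < dim_row (mat_delete L a b)" "j < dim_col (mat_delete L a b)"
  then have i: "i < m - 1" and j: "j < m - 1" using L by auto
  define i' j' where "i' = (if i < a then i else Suc i)" and "j' = (if j < b then j else Suc j)"
  have del: "mat_delete G a b $$ (i,j) = G $$ (i',j')" if "G \<in> carrier_mat m m" for G :: "real mat"
    using that i j by (auto simp: mat_delete_def i'_def j'_def)
  have "i' < m" "j' < m" using i j by (auto simp: i'_def j'_def)
  then show "((\<lambda>t. mat_delete (F t) a b $$ (i,j)) \<longlongrightarrow> mat_delete L a b $$ (i,j)) net"
    unfolding del[OF Fc] del[OF L] using tendsto_mat_index[OF F] L by auto
qed

lemma tendsto_adj_mat:
  assumes F: "tendsto_mat F L net" and L: "L \<in> carrier_mat m m"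
  shows "tendsto_mat (\<lambda>t. adj_mat (F t)) (adj_mat L) net"
  unfolding tendsto_mat_def
proof (intro conjI allI impI)
  have Fc: "F t \<in> carrier_mat m m" for t
    using tendsto_mat_carrier[OF F] L by auto
  show "adj_mat (F t) \<in> carrier_mat (dim_row (adj_mat L)) (dim_col (adj_mat L))" for t
    using adj_mat(1)[OF Fc] adj_mat(1)[OF L] by auto
  fix a b assume "a < dim_row (adj_mat L)" "b < dim_col (adj_mat L)"
  then have a: "a < m" and b: "b < m" using adj_mat(1)[OF L] by auto
  have adj: "adj_mat G $$ (a,b) = (-1)^(b+a) * det (mat_delete G b a)" if "G \<in> carrier_mat m m" for G :: "real mat"
    using that a b by (simp add: adj_mat_def cofactor_def)
  have "((\<lambda>t. det (mat_delete (F t) b a)) \<longlongrightarrow> det (mat_delete L b a)) net"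
    by (rule tendsto_det[OF tendsto_mat_delete[OF F L b a] mat_delete_carrier[OF L]])
  then show "((\<lambda>t. adj_mat (F t) $$ (a,b)) \<longlongrightarrow> adj_mat L $$ (a,b)) net"
    unfolding adj[OF Fc] adj[OF L] by (intro tendsto_intros)
qed

text \<open>A total inverse: it is the zero matrix when \<open>A\<close> is singular, and the adjugate formula shows
  that its entries are rational functions of the entries of \<open>A\<close>.\<close>

definition adj_inverse :: "real mat \<Rightarrow> real mat" where
  "adj_inverse A = (1 / det A) \<cdot>\<^sub>m adj_mat A"

lemma adj_inverse_carrier: "A \<in> carrier_mat m m \<Longrightarrow> adj_inverse A \<in> carrier_mat m m"
  by (simp add: adj_inverse_def adj_mat(1))

lemma index_adj_inverse:
  assumes "A \<in> carrier_mat m m" "i < m" "j < m"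
  shows "adj_inverse A $$ (i,j) = adj_mat A $$ (i,j) / det A"
  using assms carrier_matD[OF adj_mat(1)[OF assms(1)]] by (simp add: adj_inverse_def)

lemma adj_inverse_mult:
  assumes A: "A \<in> carrier_mat m m" and "det A \<noteq> 0"
  shows "adj_inverse A * A = 1\<^sub>m m" and "A * adj_inverse A = 1\<^sub>m m"
proof -
  have adj: "adj_mat A \<in> carrier_mat m m" by (rule adj_mat(1)[OF A])
  have one: "(1 / det A) \<cdot>\<^sub>m (det A \<cdot>\<^sub>m 1\<^sub>m m) = 1\<^sub>m m"
    by (rule eq_matI) (use assms(2) in auto)
  show "adj_inverse A * A = 1\<^sub>m m"
    unfolding adj_inverse_def mult_smult_assoc_mat[OF adj A] adj_mat(3)[OF A] one ..
  show "A * adj_inverse A = 1\<^sub>m m"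
    unfolding adj_inverse_def mult_smult_distrib[OF A adj] adj_mat(2)[OF A] one ..
qed

lemma tendsto_adj_inverse:
  assumes F: "tendsto_mat F L net" and L: "L \<in> carrier_mat m m" and "det L \<noteq> 0"
  shows "tendsto_mat (\<lambda>t. adj_inverse (F t)) (adj_inverse L) net"
  unfolding tendsto_mat_def
proof (intro conjI allI impI)
  have Fc: "F t \<in> carrier_mat m m" for t
    using tendsto_mat_carrier[OF F] L by auto
  show "adj_inverse (F t) \<in> carrier_mat (dim_row (adj_inverse L)) (dim_col (adj_inverse L))" for t
    using adj_inverse_carrier[OF Fc] adj_inverse_carrier[OF L] by auto
  fix i j assume "i < dim_row (adj_inverse L)" "j < dim_col (adj_inverse L)"
  then have i: "i < m" and j: "j < m" using adj_inverse_carrier[OF L] by auto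
  have "((\<lambda>t. adj_mat (F t) $$ (i,j) / det (F t)) \<longlongrightarrow> adj_mat L $$ (i,j) / det L) net"
    using tendsto_det[OF F L] tendsto_mat_index[OF tendsto_adj_mat[OF F L]] adj_mat(1)[OF L] i j assms(3)
    by (intro tendsto_intros) auto
  then show "((\<lambda>t. adj_inverse (F t) $$ (i,j)) \<longlongrightarrow> adj_inverse L $$ (i,j)) net"
    unfolding index_adj_inverse[OF Fc i j] index_adj_inverse[OF L i j] .
qed

lemma has_mat_derivative_carrier: "has_mat_derivative F F' t0 \<Longrightarrow> F t \<in> carrier_mat (dim_row F') (dim_col F')"
  and has_mat_derivative_index: "has_mat_derivative F F' t0 \<Longrightarrow> i < dim_row F' \<Longrightarrow> j < dim_col F' \<Longrightarrow>
    ((\<lambda>t. F t $$ (i,j)) has_real_derivative F' $$ (i,j)) (at t0)"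
  by (simp_all add: has_mat_derivative_def)

lemma has_mat_derivative_imp_tendsto:
  assumes F: "has_mat_derivative F F' t0"
  shows "tendsto_mat F (F t0) (at t0)"
  unfolding tendsto_mat_def
proof (intro conjI allI impI)
  have dims: "dim_row (F t0) = dim_row F'" "dim_col (F t0) = dim_col F'"
    using has_mat_derivative_carrier[OF F] by auto
  show "F t \<in> carrier_mat (dim_row (F t0)) (dim_col (F t0))" for t
    unfolding dims by (rule has_mat_derivative_carrier[OF F])
  fix i j assume "i < dim_row (F t0)" "j < dim_col (F t0)"
  then have "isCont (\<lambda>t. F t $$ (i,j)) t0"
    using has_mat_derivative_index[OF F] dims by (intro DERIV_isCont) auto
  then show "((\<lambda>t. F t $$ (i,j)) \<longlongrightarrow> F t0 $$ (i,j)) (at t0)"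
    by (rule isContD)
qed

lemma tendsto_mat_difference_quotient:
  assumes F: "has_mat_derivative F F' t0"
  shows "tendsto_mat (\<lambda>t. (1 / (t - t0)) \<cdot>\<^sub>m (F t - F t0)) F' (at t0)"
  unfolding tendsto_mat_def
proof (intro conjI allI impI)
  show "(1 / (t - t0)) \<cdot>\<^sub>m (F t - F t0) \<in> carrier_mat (dim_row F') (dim_col F')" for t
    using has_mat_derivative_carrier[OF F] by (simp add: minus_carrier_mat)
  fix i j assume ij: "i < dim_row F'" "j < dim_col F'"
  then have "((\<lambda>t. (F t $$ (i,j) - F t0 $$ (i,j)) / (t - t0)) \<longlongrightarrow> F' $$ (i,j)) (at t0)"
    using has_mat_derivative_index[OF F] by (simp add: has_field_derivative_iff)
  moreover have "((1 / (t - t0)) \<cdot>\<^sub>m (F t - F t0)) $$ (i,j) = (F t $$ (i,j) - F t0 $$ (i,j)) / (t - t0)" for t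
    using has_mat_derivative_carrier[OF F, of t] has_mat_derivative_carrier[OF F, of t0] ij by simp
  ultimately show "((\<lambda>t. ((1 / (t - t0)) \<cdot>\<^sub>m (F t - F t0)) $$ (i,j)) \<longlongrightarrow> F' $$ (i,j)) (at t0)"
    by simp
qed

lemma adj_inverse_mult_smult_diff:
  assumes F0: "F0 \<in> carrier_mat m m" and F1: "F1 \<in> carrier_mat m m"
    and "det F0 \<noteq> 0" "det F1 \<noteq> 0"
  shows "adj_inverse F1 * (c \<cdot>\<^sub>m (F1 - F0)) * adj_inverse F0 = c \<cdot>\<^sub>m (adj_inverse F0 - adj_inverse F1)"
proof -
  let ?E0 = "adj_inverse F0" and ?E1 = "adj_inverse F1"
  have E0: "?E0 \<in> carrier_mat m m" and E1: "?E1 \<in> carrier_mat m m"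
    using F0 F1 by (simp_all add: adj_inverse_carrier)
  have D: "F1 - F0 \<in> carrier_mat m m"
    using F0 by (simp add: minus_carrier_mat)
  have "?E1 * (F1 - F0) * ?E0 = ?E1 * F1 * ?E0 - ?E1 * (F0 * ?E0)"
    using E1 F1 F0 E0
    by (simp add: mult_minus_distrib_mat[OF E1 F1 F0] minus_mult_distrib_mat[of _ m m _ _ m])
  also have "\<dots> = ?E0 - ?E1"
    using assms E0 E1 by (simp add: adj_inverse_mult)
  finally show ?thesis
    unfolding mult_smult_distrib[OF E1 D] by (simp add: mult_smult_assoc_mat[OF mult_carrier_mat[OF E1 D] E0])
qed

lemma has_mat_derivative_adj_inverse:
  assumes F: "has_mat_derivative F F' t0" and F': "F' \<in> carrier_mat m m" and d: "det (F t0) \<noteq> 0"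
  shows "has_mat_derivative (\<lambda>t. adj_inverse (F t)) (- (adj_inverse (F t0) * F' * adj_inverse (F t0))) t0"
proof -
  have Fc: "F t \<in> carrier_mat m m" for t
    using has_mat_derivative_carrier[OF F] F' by auto
  define E where "E t = adj_inverse (F t)" for t
  define Q where "Q t = (1 / (t - t0)) \<cdot>\<^sub>m (F t - F t0)" for t
  have Ec: "E t \<in> carrier_mat m m" for t
    unfolding E_def by (rule adj_inverse_carrier[OF Fc])
  have E_lim: "tendsto_mat E (E t0) (at t0)"
    unfolding E_def by (rule tendsto_adj_inverse[OF has_mat_derivative_imp_tendsto[OF F] Fc d])
  have lim: "tendsto_mat (\<lambda>t. E t * Q t * E t0) (E t0 * F' * E t0) (at t0)"
    using carrier_matD[OF Ec[of t0]] carrier_matD[OF F'] unfolding Q_def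
    by (intro tendsto_mat_mult E_lim tendsto_mat_difference_quotient[OF F] tendsto_mat_const) auto
  have "\<forall>\<^sub>F t in at t0. det (F t) \<noteq> 0"
    by (rule tendsto_imp_eventually_ne[OF tendsto_det[OF has_mat_derivative_imp_tendsto[OF F] Fc] d])
  then have quotient: "\<forall>\<^sub>F t in at t0. E t * Q t * E t0 = (1 / (t - t0)) \<cdot>\<^sub>m (E t0 - E t)"
    unfolding E_def Q_def by (rule eventually_mono) (use adj_inverse_mult_smult_diff[OF Fc Fc d] in blast)
  show ?thesis
    unfolding has_mat_derivative_def
  proof (intro conjI allI impI)
    show "adj_inverse (F t) \<in> carrier_mat (dim_row (- (adj_inverse (F t0) * F' * adj_inverse (F t0))))
        (dim_col (- (adj_inverse (F t0) * F' * adj_inverse (F t0))))" for t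
      using Ec[of t] Ec[of t0] F' by (auto simp: E_def)
    fix i j assume "i < dim_row (- (adj_inverse (F t0) * F' * adj_inverse (F t0)))"
      "j < dim_col (- (adj_inverse (F t0) * F' * adj_inverse (F t0)))"
    then have i: "i < m" and j: "j < m"
      using Ec[of t0] F' by (auto simp: E_def)
    have "((\<lambda>t. - (E t * Q t * E t0) $$ (i,j)) \<longlongrightarrow> - (E t0 * F' * E t0) $$ (i,j)) (at t0)"
      using tendsto_mat_index[OF lim] Ec[of t0] F' i j by (intro tendsto_minus) auto
    moreover have "\<forall>\<^sub>F t in at t0. - (E t * Q t * E t0) $$ (i,j) = (E t $$ (i,j) - E t0 $$ (i,j)) / (t - t0)"
      using quotient by (rule eventually_mono) (use carrier_matD[OF Ec] i j in \<open>auto simp: minus_divide_left\<close>)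
    ultimately have "((\<lambda>t. (E t $$ (i,j) - E t0 $$ (i,j)) / (t - t0)) \<longlongrightarrow> (- (E t0 * F' * E t0)) $$ (i,j)) (at t0)"
      using Ec[of t0] F' i j by (auto intro: Lim_transform_eventually)
    then show "((\<lambda>t. adj_inverse (F t) $$ (i,j)) has_real_derivative
        (- (adj_inverse (F t0) * F' * adj_inverse (F t0))) $$ (i,j)) (at t0)"
      by (simp add: has_field_derivative_iff E_def)
  qed
qed

lemma has_mat_derivative_affine:
  assumes "A \<in> carrier_mat nr nc" "B \<in> carrier_mat nr nc"
  shows "has_mat_derivative (\<lambda>t. A + t \<cdot>\<^sub>m B) B t0"
  unfolding has_mat_derivative_def
proof (intro conjI allI impI)
  show "A + t \<cdot>\<^sub>m B \<in> carrier_mat (dim_row B) (dim_col B)" for t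
    using assms by auto
  fix i j assume "i < dim_row B" "j < dim_col B"
  then have "(A + t \<cdot>\<^sub>m B) $$ (i,j) = A $$ (i,j) + t * B $$ (i,j)" for t
    by simp
  moreover have "((\<lambda>t. A $$ (i,j) + t * B $$ (i,j)) has_real_derivative B $$ (i,j)) (at t0)"
    by (auto intro!: derivative_eq_intros)
  ultimately show "((\<lambda>t. (A + t \<cdot>\<^sub>m B) $$ (i,j)) has_real_derivative B $$ (i,j)) (at t0)"
    by simp
qed

lemma has_mat_derivative_mult:
  assumes F: "has_mat_derivative F F' t0" and G: "has_mat_derivative G G' t0"
    and FG: "dim_col F' = dim_row G'"
  shows "has_mat_derivative (\<lambda>t. F t * G t) (F' * G t0 + F t0 * G') t0"
  unfolding has_mat_derivative_def
proof (intro conjI allI impI)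
  have Fc: "F t \<in> carrier_mat (dim_row F') (dim_row G')" and Gc: "G t \<in> carrier_mat (dim_row G') (dim_col G')" for t
    using has_mat_derivative_carrier[OF F, of t] has_mat_derivative_carrier[OF G, of t] unfolding FG .
  have F'c: "F' \<in> carrier_mat (dim_row F') (dim_row G')" and G'c: "G' \<in> carrier_mat (dim_row G') (dim_col G')"
    using FG by (auto intro: carrier_matI)
  have dims: "dim_row (F' * G t0 + F t0 * G') = dim_row F'" "dim_col (F' * G t0 + F t0 * G') = dim_col G'"
    using Fc Gc by auto
  show "F t * G t \<in> carrier_mat (dim_row (F' * G t0 + F t0 * G')) (dim_col (F' * G t0 + F t0 * G'))" for t
    unfolding dims by (rule mult_carrier_mat[OF Fc Gc])
  fix i j assume "i < dim_row (F' * G t0 + F t0 * G')" "j < dim_col (F' * G t0 + F t0 * G')"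
  then have i: "i < dim_row F'" and j: "j < dim_col G'" unfolding dims .
  have "((\<lambda>t. \<Sum>l<dim_row G'. F t $$ (i,l) * G t $$ (l,j)) has_real_derivative
      (\<Sum>l<dim_row G'. F' $$ (i,l) * G t0 $$ (l,j) + G' $$ (l,j) * F t0 $$ (i,l))) (at t0)"
    using i j FG by (intro DERIV_sum DERIV_mult has_mat_derivative_index[OF F] has_mat_derivative_index[OF G]) auto
  moreover have "(F' * G t0 + F t0 * G') $$ (i,j)
      = (\<Sum>l<dim_row G'. F' $$ (i,l) * G t0 $$ (l,j) + G' $$ (l,j) * F t0 $$ (i,l))"
    using i j carrier_matD[OF Fc] carrier_matD[OF Gc] carrier_matD[OF G'c]
    by (simp add: index_mult_mat_sum[OF F'c Gc i j] index_mult_mat_sum[OF Fc G'c i j] sum.distrib mult.commute)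
  ultimately show "((\<lambda>t. (F t * G t) $$ (i,j)) has_real_derivative (F' * G t0 + F t0 * G') $$ (i,j)) (at t0)"
    unfolding index_mult_mat_sum[OF Fc Gc i j] by simp
qed

lemma has_mat_derivative_mult_left:
  assumes F: "has_mat_derivative F F' t0" and K: "K \<in> carrier_mat nr (dim_row F')"
  shows "has_mat_derivative (\<lambda>t. K * F t) (K * F') t0"
  unfolding has_mat_derivative_def
proof (intro conjI allI impI)
  have Fc: "F t \<in> carrier_mat (dim_row F') (dim_col F')" for t
    by (rule has_mat_derivative_carrier[OF F])
  have F'c: "F' \<in> carrier_mat (dim_row F') (dim_col F')"
    by (rule carrier_matI) auto
  show "K * F t \<in> carrier_mat (dim_row (K * F')) (dim_col (K * F'))" for t
    using mult_carrier_mat[OF K Fc] K by simp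
  fix i j assume "i < dim_row (K * F')" "j < dim_col (K * F')"
  then have i: "i < nr" and j: "j < dim_col F'" using K by auto
  have "((\<lambda>t. \<Sum>l<dim_row F'. K $$ (i,l) * F t $$ (l,j)) has_real_derivative
      (\<Sum>l<dim_row F'. K $$ (i,l) * F' $$ (l,j))) (at t0)"
    using j by (intro DERIV_sum DERIV_cmult has_mat_derivative_index[OF F]) auto
  then show "((\<lambda>t. (K * F t) $$ (i,j)) has_real_derivative (K * F') $$ (i,j)) (at t0)"
    unfolding index_mult_mat_sum[OF K Fc i j] index_mult_mat_sum[OF K F'c i j] .
qed

lemma has_mat_derivative_minus:
  assumes F: "has_mat_derivative F F' t0" and G: "has_mat_derivative G G' t0"
    and "G' \<in> carrier_mat (dim_row F') (dim_col F')"
  shows "has_mat_derivative (\<lambda>t. F t - G t) (F' - G') t0"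
  unfolding has_mat_derivative_def
proof (intro conjI allI impI)
  have Fc: "F t \<in> carrier_mat (dim_row F') (dim_col F')" and Gc: "G t \<in> carrier_mat (dim_row F') (dim_col F')" for t
    using has_mat_derivative_carrier[OF F, of t] has_mat_derivative_carrier[OF G, of t] assms(3) by auto
  show "F t - G t \<in> carrier_mat (dim_row (F' - G')) (dim_col (F' - G'))" for t
    using Fc Gc assms(3) by (auto simp: minus_carrier_mat)
  fix i j assume "i < dim_row (F' - G')" "j < dim_col (F' - G')"
  then have i: "i < dim_row F'" and j: "j < dim_col F'" using assms(3) by auto
  have "((\<lambda>t. F t $$ (i,j) - G t $$ (i,j)) has_real_derivative F' $$ (i,j) - G' $$ (i,j)) (at t0)"
    using i j assms(3) by (intro DERIV_diff has_mat_derivative_index[OF F] has_mat_derivative_index[OF G]) auto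
  then show "((\<lambda>t. (F t - G t) $$ (i,j)) has_real_derivative (F' - G') $$ (i,j)) (at t0)"
    using i j carrier_matD[OF Gc] carrier_matD[OF assms(3)] by simp
qed

lemma has_mat_derivative_const_minus_smult:
  assumes F: "has_mat_derivative F F' t0" and "A \<in> carrier_mat (dim_row F') (dim_col F')"
  shows "has_mat_derivative (\<lambda>t. A - a \<cdot>\<^sub>m F t) (- (a \<cdot>\<^sub>m F')) t0"
  unfolding has_mat_derivative_def
proof (intro conjI allI impI)
  have Fc: "F t \<in> carrier_mat (dim_row F') (dim_col F')" for t
    by (rule has_mat_derivative_carrier[OF F])
  show "A - a \<cdot>\<^sub>m F t \<in> carrier_mat (dim_row (- (a \<cdot>\<^sub>m F'))) (dim_col (- (a \<cdot>\<^sub>m F')))" for t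
    using Fc by (simp add: minus_carrier_mat)
  fix i j assume "i < dim_row (- (a \<cdot>\<^sub>m F'))" "j < dim_col (- (a \<cdot>\<^sub>m F'))"
  then have i: "i < dim_row F'" and j: "j < dim_col F'" by auto
  have "((\<lambda>t. A $$ (i,j) - a * F t $$ (i,j)) has_real_derivative - (a * F' $$ (i,j))) (at t0)"
    using i j by (auto intro!: derivative_eq_intros has_mat_derivative_index[OF F])
  then show "((\<lambda>t. (A - a \<cdot>\<^sub>m F t) $$ (i,j)) has_real_derivative (- (a \<cdot>\<^sub>m F')) $$ (i,j)) (at t0)"
    using i j carrier_matD[OF Fc] by simp
qed

section \<open>Block structure of \<open>M\<close>\<close>

lemma four_block_mat_inject:
  assumes eq: "four_block_mat A B C D = four_block_mat A' B' C' D'"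
    and c: "A \<in> carrier_mat n1 m1" "B \<in> carrier_mat n1 m2" "C \<in> carrier_mat n2 m1" "D \<in> carrier_mat n2 m2"
      "A' \<in> carrier_mat n1 m1" "B' \<in> carrier_mat n1 m2" "C' \<in> carrier_mat n2 m1" "D' \<in> carrier_mat n2 m2"
  shows "A = A' \<and> B = B' \<and> C = C' \<and> D = D'"
proof -
  have e: "four_block_mat A B C D $$ (i,j) = four_block_mat A' B' C' D' $$ (i,j)" for i j
    using eq by simp
  have "A = A'"
  proof (rule eq_matI)
    fix i j assume "i < dim_row A'" "j < dim_col A'"
    then show "A $$ (i,j) = A' $$ (i,j)" using e[of i j] c by auto
  qed (use c in auto)
  moreover have "B = B'"
  proof (rule eq_matI)
    fix i j assume "i < dim_row B'" "j < dim_col B'"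
    then show "B $$ (i,j) = B' $$ (i,j)" using e[of i "j + m1"] c by auto
  qed (use c in auto)
  moreover have "C = C'"
  proof (rule eq_matI)
    fix i j assume "i < dim_row C'" "j < dim_col C'"
    then show "C $$ (i,j) = C' $$ (i,j)" using e[of "i + n1" j] c by auto
  qed (use c in auto)
  moreover have "D = D'"
  proof (rule eq_matI)
    fix i j assume "i < dim_row D'" "j < dim_col D'"
    then show "D $$ (i,j) = D' $$ (i,j)" using e[of "i + n1" "j + m1"] c by auto
  qed (use c in auto)
  ultimately show ?thesis by simp
qed

lemma block_diag_mult_four_block_mat:
  assumes "P \<in> carrier_mat n n" "K1 \<in> carrier_mat n n" "K2 \<in> carrier_mat n n"
    "K3 \<in> carrier_mat n n" "K4 \<in> carrier_mat n n"
  shows "four_block_mat P (0\<^sub>m n n) (0\<^sub>m n n) P * four_block_mat K1 K2 K3 K4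
    = four_block_mat (P * K1) (P * K2) (P * K3) (P * K4)"
  using assms by (subst mult_four_block_mat[OF assms(1) zero_carrier_mat zero_carrier_mat assms(1) assms(2-)]) auto

lemma four_block_mat_mult_block_diag:
  assumes "P \<in> carrier_mat n n" "K1 \<in> carrier_mat n n" "K2 \<in> carrier_mat n n"
    "K3 \<in> carrier_mat n n" "K4 \<in> carrier_mat n n"
  shows "four_block_mat K1 K2 K3 K4 * four_block_mat P (0\<^sub>m n n) (0\<^sub>m n n) P
    = four_block_mat (K1 * P) (K2 * P) (K3 * P) (K4 * P)"
  using assms by (subst mult_four_block_mat[OF assms(2-) assms(1) zero_carrier_mat zero_carrier_mat assms(1)]) auto

lemma admissible_hessian_blocks:
  assumes "admissible_hessian n H"
  obtains K1 K2 K4 where "anticirculant n K1" "anticirculant n K2" "anticirculant n K4"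
    and "H = four_block_mat K1 K2 K2 K4"
proof -
  have Hc: "H \<in> carrier_mat (n + n) (n + n)" and sym: "transpose_mat H = H"
    and AH: "Amat n * H = H * transpose_mat (Amat n)"
    using assms by (auto simp: admissible_hessian_def mult_2)
  obtain K1 K2 K3 K4 where split: "split_block H n n = (K1, K2, K3, K4)"
    by (metis prod_cases4)
  note blocks = split_block[OF split, of n n]
  have K: "K1 \<in> carrier_mat n n" "K2 \<in> carrier_mat n n" "K3 \<in> carrier_mat n n" "K4 \<in> carrier_mat n n"
    and H: "H = four_block_mat K1 K2 K3 K4"
    using blocks Hc by auto
  let ?P = "Pshift n" and ?Q = "transpose_mat (Pshift n)"
  have At: "transpose_mat (Amat n) = four_block_mat ?Q (0\<^sub>m n n) (0\<^sub>m n n) ?Q"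
    unfolding Amat_def by (subst transpose_four_block_mat) auto
  have "Amat n * H = four_block_mat (?P * K1) (?P * K2) (?P * K3) (?P * K4)"
    unfolding Amat_def H by (rule block_diag_mult_four_block_mat) (use K in auto)
  moreover have "H * transpose_mat (Amat n) = four_block_mat (K1 * ?Q) (K2 * ?Q) (K3 * ?Q) (K4 * ?Q)"
    unfolding At H by (rule four_block_mat_mult_block_diag) (use K in auto)
  ultimately have "four_block_mat (?P * K1) (?P * K2) (?P * K3) (?P * K4)
      = four_block_mat (K1 * ?Q) (K2 * ?Q) (K3 * ?Q) (K4 * ?Q)"
    using AH by simp
  then have "?P * K1 = K1 * ?Q \<and> ?P * K2 = K2 * ?Q \<and> ?P * K3 = K3 * ?Q \<and> ?P * K4 = K4 * ?Q"
    by (rule four_block_mat_inject) (use K in auto)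
  then have anti: "anticirculant n K1" "anticirculant n K2" "anticirculant n K4"
    using K by (auto simp: anticirculant_def)
  have "transpose_mat H = four_block_mat (transpose_mat K1) (transpose_mat K3) (transpose_mat K2) (transpose_mat K4)"
    unfolding H by (rule transpose_four_block_mat) (use K in auto)
  then have "four_block_mat (transpose_mat K1) (transpose_mat K3) (transpose_mat K2) (transpose_mat K4)
      = four_block_mat K1 K2 K3 K4"
    using sym H by simp
  then have "transpose_mat K2 = K3"
    by (rule four_block_mat_inject[THEN conjunct2, THEN conjunct2, THEN conjunct1]) (use K in auto)
  then have "K3 = K2"
    using anticirculant_transpose[OF anti(2)] by simp
  then show ?thesis
    using that anti H by simp
qed

text \<open>For \<open>H = [[K1, K2], [K2, K4]]\<close> we get \<open>HJ(x) = [[-K2 X, K1 X], [-K4 X, K2 X]]\<close>, whose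
  square is block diagonal with this block.\<close>

definition HJ_sq_block :: "real mat \<Rightarrow> real mat \<Rightarrow> real mat \<Rightarrow> real mat \<Rightarrow> real mat" where
  "HJ_sq_block K1 K2 K4 X = K2 * X * (K2 * X) - K1 * X * (K4 * X)"

definition M_block :: "real mat \<Rightarrow> real mat \<Rightarrow> real mat \<Rightarrow> real mat \<Rightarrow> real \<Rightarrow> real mat" where
  "M_block K1 K2 K4 X eps = 1\<^sub>m (dim_row X) - eps\<^sup>2 \<cdot>\<^sub>m HJ_sq_block K1 K2 K4 X"

lemma HJ_sq_block_carrier:
  "K1 \<in> carrier_mat n n \<Longrightarrow> K2 \<in> carrier_mat n n \<Longrightarrow> K4 \<in> carrier_mat n n \<Longrightarrow> X \<in> carrier_mat n n \<Longrightarrow>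
    HJ_sq_block K1 K2 K4 X \<in> carrier_mat n n"
  unfolding HJ_sq_block_def by (intro minus_carrier_mat mult_carrier_mat[of _ n n _ n]) auto

lemma M_block_carrier:
  "K1 \<in> carrier_mat n n \<Longrightarrow> K2 \<in> carrier_mat n n \<Longrightarrow> K4 \<in> carrier_mat n n \<Longrightarrow> X \<in> carrier_mat n n \<Longrightarrow>
    M_block K1 K2 K4 X eps \<in> carrier_mat n n"
  unfolding M_block_def by (intro minus_carrier_mat) (simp add: HJ_sq_block_carrier)

lemma circulant_HJ_sq_block:
  assumes "anticirculant n K1" "anticirculant n K2" "anticirculant n K4" "anticirculant n X"
  shows "circulant n (HJ_sq_block K1 K2 K4 X)"
  unfolding HJ_sq_block_def using assms by (intro circulant_minus circulant_mult anticirculant_mult)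

lemma circulant_M_block:
  assumes "anticirculant n K1" "anticirculant n K2" "anticirculant n K4" "anticirculant n X"
  shows "circulant n (M_block K1 K2 K4 X eps)"
  using assms anticirculant_carrier[OF assms(4)] unfolding M_block_def
  by (auto intro!: circulant_minus circulant_one circulant_smult circulant_HJ_sq_block)

lemma four_block_mat_square_commuting:
  fixes a b c :: "'a :: comm_ring_1 mat"
  assumes c: "a \<in> carrier_mat n n" "b \<in> carrier_mat n n" "c \<in> carrier_mat n n"
    and ab: "b * a = a * b" and ac: "c * a = a * c" and bc: "c * b = b * c"
  shows "four_block_mat (- a) b (- c) a * four_block_mat (- a) b (- c) a
    = four_block_mat (a * a - b * c) (0\<^sub>m n n) (0\<^sub>m n n) (a * a - b * c)"
proof -
  have "four_block_mat (- a) b (- c) a * four_block_mat (- a) b (- c) a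
      = four_block_mat (- a * - a + b * - c) (- a * b + b * a) (- c * - a + a * - c) (- c * b + a * a)"
    by (rule mult_four_block_mat) (use c in auto)
  also have "\<dots> = four_block_mat (a * a - b * c) (0\<^sub>m n n) (0\<^sub>m n n) (a * a - b * c)"
  proof (rule cong_four_block_mat)
    show "- a * - a + b * - c = a * a - b * c"
      by (rule eq_matI) (use c in auto)
    show "- a * b + b * a = 0\<^sub>m n n"
      unfolding ab by (rule eq_matI) (use c in auto)
    show "- c * - a + a * - c = 0\<^sub>m n n"
    proof -
      have "- c * - a = a * c"
        using ac carrier_matD[OF c(1)] carrier_matD[OF c(3)] by simp
      then show ?thesis
        by (intro eq_matI) (use c in auto)
    qed
    show "- c * b + a * a = a * a - b * c"
    proof -
      have "- c * b = - (b * c)"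
        using bc carrier_matD[OF c(2)] carrier_matD[OF c(3)] by simp
      then show ?thesis
        by (intro eq_matI) (use c in auto)
    qed
  qed
  finally show ?thesis .
qed

lemma Mmat_eq_block_diag:
  assumes K: "anticirculant n K1" "anticirculant n K2" "anticirculant n K4"
    and H: "H = four_block_mat K1 K2 K2 K4"
  shows "Mmat n H x eps = four_block_mat (M_block K1 K2 K4 (Xmat n x) eps) (0\<^sub>m n n)
      (0\<^sub>m n n) (M_block K1 K2 K4 (Xmat n x) eps)"
proof -
  let ?X = "Xmat n x"
  let ?a = "K2 * ?X" and ?b = "K1 * ?X" and ?c = "K4 * ?X"
  have Kc: "K1 \<in> carrier_mat n n" "K2 \<in> carrier_mat n n" "K4 \<in> carrier_mat n n"
    using K by (auto simp: anticirculant_carrier)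
  have circ: "circulant n ?a" "circulant n ?b" "circulant n ?c"
    using K Xmat_anticirculant by (auto intro: anticirculant_mult)
  have abc: "?a \<in> carrier_mat n n" "?b \<in> carrier_mat n n" "?c \<in> carrier_mat n n"
    using circ by (auto simp: circulant_carrier)
  have "H * Jmat n x = four_block_mat K1 K2 K2 K4 * four_block_mat (0\<^sub>m n n) ?X (- ?X) (0\<^sub>m n n)"
    unfolding H Jmat_def ..
  also have "\<dots> = four_block_mat (K1 * 0\<^sub>m n n + K2 * - ?X) (K1 * ?X + K2 * 0\<^sub>m n n)
      (K2 * 0\<^sub>m n n + K4 * - ?X) (K2 * ?X + K4 * 0\<^sub>m n n)"
    by (rule mult_four_block_mat) (use Kc in auto)
  also have "\<dots> = four_block_mat (- ?a) ?b (- ?c) ?a"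
    using abc Kc by (intro cong_four_block_mat) auto
  finally have HJ: "H * Jmat n x = four_block_mat (- ?a) ?b (- ?c) ?a" .
  have sq: "H * Jmat n x * (H * Jmat n x) = four_block_mat (HJ_sq_block K1 K2 K4 ?X) (0\<^sub>m n n)
      (0\<^sub>m n n) (HJ_sq_block K1 K2 K4 ?X)"
    unfolding HJ HJ_sq_block_def
    by (rule four_block_mat_square_commuting[OF abc]) (use circ circulant_mult_commute in blast)+
  have D: "HJ_sq_block K1 K2 K4 ?X \<in> carrier_mat n n"
    using Kc by (simp add: HJ_sq_block_carrier)
  show ?thesis
    unfolding Mmat_def sq M_block_def by (rule eq_matI) (use carrier_matD[OF D] in auto)
qed

section \<open>Partial derivatives of the inverse\<close>

definition HJ_sq_block_deriv :: "real mat \<Rightarrow> real mat \<Rightarrow> real mat \<Rightarrow> real mat \<Rightarrow> real mat \<Rightarrow> real mat" where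
  "HJ_sq_block_deriv K1 K2 K4 X S = K2 * S * (K2 * X) + K2 * X * (K2 * S) - (K1 * S * (K4 * X) + K1 * X * (K4 * S))"

definition inverse_M_block_deriv :: "real mat \<Rightarrow> real mat \<Rightarrow> real mat \<Rightarrow> real mat \<Rightarrow> real \<Rightarrow> real mat \<Rightarrow> real mat" where
  "inverse_M_block_deriv K1 K2 K4 X eps S = adj_inverse (M_block K1 K2 K4 X eps)
     * (eps\<^sup>2 \<cdot>\<^sub>m HJ_sq_block_deriv K1 K2 K4 X S) * adj_inverse (M_block K1 K2 K4 X eps)"

lemma HJ_sq_block_deriv_carrier:
  assumes "K1 \<in> carrier_mat n n" "K2 \<in> carrier_mat n n" "K4 \<in> carrier_mat n n"
    "X \<in> carrier_mat n n" "S \<in> carrier_mat n n"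
  shows "HJ_sq_block_deriv K1 K2 K4 X S \<in> carrier_mat n n"
  unfolding HJ_sq_block_deriv_def using assms
  by (intro minus_carrier_mat add_carrier_mat mult_carrier_mat[of _ n n _ n]) auto

lemma has_mat_derivative_HJ_sq_block:
  assumes X: "has_mat_derivative Xt S t0" and S: "S \<in> carrier_mat n n"
    and K: "K1 \<in> carrier_mat n n" "K2 \<in> carrier_mat n n" "K4 \<in> carrier_mat n n"
  shows "has_mat_derivative (\<lambda>t. HJ_sq_block K1 K2 K4 (Xt t)) (HJ_sq_block_deriv K1 K2 K4 (Xt t0) S) t0"
proof -
  have Xc: "Xt t \<in> carrier_mat n n" for t
    using has_mat_derivative_carrier[OF X] S by auto
  have lin: "has_mat_derivative (\<lambda>t. K * Xt t) (K * S) t0" if "K \<in> carrier_mat n n" for K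
    using that S by (intro has_mat_derivative_mult_left[OF X]) auto
  have quad: "has_mat_derivative (\<lambda>t. K * Xt t * (L * Xt t)) (K * S * (L * Xt t0) + K * Xt t0 * (L * S)) t0"
    if "K \<in> carrier_mat n n" "L \<in> carrier_mat n n" for K L
    using has_mat_derivative_mult[OF lin[OF that(1)] lin[OF that(2)]] that S by simp
  show ?thesis
    unfolding HJ_sq_block_def HJ_sq_block_deriv_def
    by (rule has_mat_derivative_minus[OF quad quad]) (use K S Xc in \<open>auto intro!: add_carrier_mat mult_carrier_mat[of _ n n _ n]\<close>)
qed

lemma has_mat_derivative_inverse_M_block:
  assumes K: "K1 \<in> carrier_mat n n" "K2 \<in> carrier_mat n n" "K4 \<in> carrier_mat n n"
    and X: "X \<in> carrier_mat n n" and S: "S \<in> carrier_mat n n"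
    and d: "det (M_block K1 K2 K4 X eps) \<noteq> 0"
  shows "has_mat_derivative (\<lambda>t. adj_inverse (M_block K1 K2 K4 (X + t \<cdot>\<^sub>m S) eps))
      (inverse_M_block_deriv K1 K2 K4 X eps S) 0"
proof -
  let ?E = "adj_inverse (M_block K1 K2 K4 X eps)" and ?D' = "HJ_sq_block_deriv K1 K2 K4 X S"
  have X0: "X + 0 \<cdot>\<^sub>m S = X"
    by (rule eq_matI) (use X S in auto)
  have M: "M_block K1 K2 K4 (X + t \<cdot>\<^sub>m S) eps = 1\<^sub>m n - eps\<^sup>2 \<cdot>\<^sub>m HJ_sq_block K1 K2 K4 (X + t \<cdot>\<^sub>m S)" for t
    using S by (simp add: M_block_def)
  have "has_mat_derivative (\<lambda>t. HJ_sq_block K1 K2 K4 (X + t \<cdot>\<^sub>m S)) ?D' 0"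
    using has_mat_derivative_HJ_sq_block[OF has_mat_derivative_affine[OF X S, of 0] S K] unfolding X0 .
  then have "has_mat_derivative (\<lambda>t. M_block K1 K2 K4 (X + t \<cdot>\<^sub>m S) eps) (- (eps\<^sup>2 \<cdot>\<^sub>m ?D')) 0"
    unfolding M using HJ_sq_block_deriv_carrier[OF K X S]
    by (intro has_mat_derivative_const_minus_smult) auto
  from has_mat_derivative_adj_inverse[OF this, of n]
  have "has_mat_derivative (\<lambda>t. adj_inverse (M_block K1 K2 K4 (X + t \<cdot>\<^sub>m S) eps))
      (- (?E * - (eps\<^sup>2 \<cdot>\<^sub>m ?D') * ?E)) 0"
    using d HJ_sq_block_deriv_carrier[OF K X S] unfolding X0 by simp
  moreover have "- (?E * - (eps\<^sup>2 \<cdot>\<^sub>m ?D') * ?E) = inverse_M_block_deriv K1 K2 K4 X eps S"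
    using carrier_matD[OF adj_inverse_carrier[OF M_block_carrier[OF K X]]] carrier_matD[OF HJ_sq_block_deriv_carrier[OF K X S]]
    by (simp add: inverse_M_block_deriv_def)
  ultimately show ?thesis
    by simp
qed

lemma mult_assoc_commuting:
  assumes "A \<in> carrier_mat nr n" "P \<in> carrier_mat n n" "B \<in> carrier_mat n n" "P * B = B * P"
  shows "A * P * B = A * B * (P :: real mat)"
  using assms by (simp add: assoc_mult_mat[of A nr n P n B n] assoc_mult_mat[of A nr n B n P n])

lemma HJ_sq_block_deriv_mult_Pshift:
  assumes K: "K1 \<in> carrier_mat n n" "K2 \<in> carrier_mat n n" "K4 \<in> carrier_mat n n"
    and X: "X \<in> carrier_mat n n" and S: "S \<in> carrier_mat n n"
    and a: "circulant n (K2 * X)" and c: "circulant n (K4 * X)"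
  shows "HJ_sq_block_deriv K1 K2 K4 X (S * Pshift n) = HJ_sq_block_deriv K1 K2 K4 X S * Pshift n"
proof -
  let ?P = "Pshift n" and ?a = "K2 * X" and ?b = "K1 * X" and ?c = "K4 * X"
  let ?\<alpha> = "K2 * S" and ?\<beta> = "K1 * S" and ?\<gamma> = "K4 * S"
  have P: "?P \<in> carrier_mat n n" by simp
  have c0: "?a \<in> carrier_mat n n" "?b \<in> carrier_mat n n" "?c \<in> carrier_mat n n"
    "?\<alpha> \<in> carrier_mat n n" "?\<beta> \<in> carrier_mat n n" "?\<gamma> \<in> carrier_mat n n"
    using K X S by auto
  have c1: "?\<alpha> * ?a \<in> carrier_mat n n" "?a * ?\<alpha> \<in> carrier_mat n n"
    "?\<beta> * ?c \<in> carrier_mat n n" "?b * ?\<gamma> \<in> carrier_mat n n"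
    using c0 by auto
  have shift: "K * (S * ?P) = K * S * ?P" if "K \<in> carrier_mat n n" for K
    using that S by (simp add: assoc_mult_mat[of K n n S n ?P n])
  have "HJ_sq_block_deriv K1 K2 K4 X (S * ?P) = ?\<alpha> * ?P * ?a + ?a * (?\<alpha> * ?P) - (?\<beta> * ?P * ?c + ?b * (?\<gamma> * ?P))"
    unfolding HJ_sq_block_deriv_def shift[OF K(1)] shift[OF K(2)] shift[OF K(3)] ..
  also have "\<dots> = ?\<alpha> * ?a * ?P + ?a * ?\<alpha> * ?P - (?\<beta> * ?c * ?P + ?b * ?\<gamma> * ?P)"
    using c0 a c
    by (simp add: mult_assoc_commuting[of _ n n] circulant_def assoc_mult_mat[of _ n n _ n ?P n])
  also have "\<dots> = (?\<alpha> * ?a + ?a * ?\<alpha> - (?\<beta> * ?c + ?b * ?\<gamma>)) * ?P"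
    by (simp only: minus_mult_distrib_mat[OF add_carrier_mat[OF c1(2)] add_carrier_mat[OF c1(4)] P]
        add_mult_distrib_mat[OF c1(1) c1(2) P] add_mult_distrib_mat[OF c1(3) c1(4) P])
  finally show ?thesis
    unfolding HJ_sq_block_deriv_def .
qed

lemma inverse_M_block_deriv_mult_Pshift:
  assumes K: "anticirculant n K1" "anticirculant n K2" "anticirculant n K4"
    and X: "anticirculant n X" and S: "S \<in> carrier_mat n n"
    and d: "det (M_block K1 K2 K4 X eps) \<noteq> 0"
  shows "inverse_M_block_deriv K1 K2 K4 X eps (S * Pshift n) = inverse_M_block_deriv K1 K2 K4 X eps S * Pshift n"
proof -
  let ?P = "Pshift n" and ?M = "M_block K1 K2 K4 X eps"
  let ?E = "adj_inverse ?M" and ?D = "eps\<^sup>2 \<cdot>\<^sub>m HJ_sq_block_deriv K1 K2 K4 X S"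
  have Kc: "K1 \<in> carrier_mat n n" "K2 \<in> carrier_mat n n" "K4 \<in> carrier_mat n n" and Xc: "X \<in> carrier_mat n n"
    using K X by (auto simp: anticirculant_carrier)
  have M: "?M \<in> carrier_mat n n" by (rule M_block_carrier[OF Kc Xc])
  have E: "?E \<in> carrier_mat n n" by (rule adj_inverse_carrier[OF M])
  have D: "?D \<in> carrier_mat n n" using HJ_sq_block_deriv_carrier[OF Kc Xc S] by simp
  have "circulant n ?E"
    by (rule circulant_inverse[OF circulant_M_block[OF K X] E adj_inverse_mult[OF M d]])
  then have PE: "?P * ?E = ?E * ?P"
    by (simp add: circulant_def)
  have "eps\<^sup>2 \<cdot>\<^sub>m HJ_sq_block_deriv K1 K2 K4 X (S * ?P) = ?D * ?P"
    using HJ_sq_block_deriv_mult_Pshift[OF Kc Xc S] K X HJ_sq_block_deriv_carrier[OF Kc Xc S]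
    by (simp add: anticirculant_mult mult_smult_assoc_mat[of _ n n ?P n])
  then have "inverse_M_block_deriv K1 K2 K4 X eps (S * ?P) = ?E * (?D * ?P) * ?E"
    by (simp add: inverse_M_block_deriv_def)
  also have "\<dots> = ?E * ?D * ?E * ?P"
    using E D PE by (simp add: assoc_mult_mat[of _ n n _ n _ n])
  finally show ?thesis
    by (simp add: inverse_M_block_deriv_def)
qed

lemma Xmat_add_smult:
  assumes "x \<in> carrier_vec m" "v \<in> carrier_vec m" "n \<le> m"
  shows "Xmat n (x + t \<cdot>\<^sub>v v) = Xmat n x + t \<cdot>\<^sub>m Xmat n v"
proof (rule eq_matI)
  fix i j assume "i < dim_row (Xmat n x + t \<cdot>\<^sub>m Xmat n v)" "j < dim_col (Xmat n x + t \<cdot>\<^sub>m Xmat n v)"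
  then have "i < n" "j < n" by auto
  moreover have "(i + j) mod n < m"
    using \<open>i < n\<close> assms(3) mod_less_divisor[of n "i + j"] by linarith
  ultimately show "Xmat n (x + t \<cdot>\<^sub>v v) $$ (i,j) = (Xmat n x + t \<cdot>\<^sub>m Xmat n v) $$ (i,j)"
    using assms by (simp add: Xmat_def)
qed auto

lemma Xmat_unit_vec_ge:
  assumes "n \<le> k" "n \<le> m"
  shows "Xmat n (unit_vec m k) = 0\<^sub>m n n"
proof (rule eq_matI)
  fix i j assume "i < dim_row (0\<^sub>m n n :: real mat)" "j < dim_col (0\<^sub>m n n :: real mat)"
  then have "i < n" "j < n" by auto
  moreover have "(i + j) mod n < m" "(i + j) mod n \<noteq> k"
    using \<open>i < n\<close> assms mod_less_divisor[of n "i + j"] by linarith+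
  ultimately show "Xmat n (unit_vec m k) $$ (i,j) = 0\<^sub>m n n $$ (i,j)"
    by (simp add: Xmat_def unit_vec_def)
qed auto

lemma residue_add_mod:
  assumes "0 < n"
  shows "(i + residue n k) mod n = residue n (int i + k)"
proof -
  have "int ((i + residue n k) mod n) = (int i + k) mod int n"
    using assms by (simp add: of_nat_mod of_nat_residue mod_add_right_eq)
  then show ?thesis
    unfolding residue_def by linarith
qed

lemma Xmat_unit_vec_Suc_mod:
  assumes k: "k < n" and m: "n \<le> m"
  shows "Xmat n (unit_vec m (Suc k mod n)) = Xmat n (unit_vec m k) * Pshift n"
proof (rule eq_matI)
  fix i j assume "i < dim_row (Xmat n (unit_vec m k) * Pshift n)" "j < dim_col (Xmat n (unit_vec m k) * Pshift n)"
  then have i: "i < n" and j: "j < n" by auto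
  then have n: "0 < n" by simp
  have idx: "(i + j) mod n < m" "(i + residue n (int j - 1)) mod n < m" "Suc k mod n < m"
    using n m mod_less_divisor[of n] by (meson order_less_le_trans)+
  have "residue n (int ((i + j) mod n) - 1) = residue n (int i + (int j - 1))"
    by (simp add: residue_def of_nat_mod mod_diff_left_eq algebra_simps)
  then have "(i + residue n (int j - 1)) mod n = k \<longleftrightarrow> residue n (int ((i + j) mod n) - 1) = k"
    using n by (simp add: residue_add_mod)
  also have "\<dots> \<longleftrightarrow> (i + j) mod n = Suc k mod n"
    using Suc_mod_eq_iff[of k n "(i + j) mod n"] k n by auto
  finally have iff: "(i + residue n (int j - 1)) mod n = k \<longleftrightarrow> (i + j) mod n = Suc k mod n" .
  have "(Xmat n (unit_vec m k) * Pshift n) $$ (i,j) = Xmat n (unit_vec m k) $$ (i, residue n (int j - 1))"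
    using i j by (intro index_mult_Pshift) auto
  also have "\<dots> = Xmat n (unit_vec m (Suc k mod n)) $$ (i,j)"
    using i j n idx iff by (simp add: Xmat_def unit_vec_def residue_less)
  finally show "Xmat n (unit_vec m (Suc k mod n)) $$ (i,j) = (Xmat n (unit_vec m k) * Pshift n) $$ (i,j)" ..
qed auto

lemma inverse_M_block_deriv_carrier:
  assumes "K1 \<in> carrier_mat n n" "K2 \<in> carrier_mat n n" "K4 \<in> carrier_mat n n"
    "X \<in> carrier_mat n n" "S \<in> carrier_mat n n"
  shows "inverse_M_block_deriv K1 K2 K4 X eps S \<in> carrier_mat n n"
  unfolding inverse_M_block_deriv_def
  using adj_inverse_carrier[OF M_block_carrier[OF assms(1-4)]] HJ_sq_block_deriv_carrier[OF assms]
  by (intro mult_carrier_mat[of _ n n _ n]) auto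

lemma inverse_M_block_deriv_zero:
  assumes "K1 \<in> carrier_mat n n" "K2 \<in> carrier_mat n n" "K4 \<in> carrier_mat n n" "X \<in> carrier_mat n n"
  shows "inverse_M_block_deriv K1 K2 K4 X eps (0\<^sub>m n n) = 0\<^sub>m n n"
proof -
  have "HJ_sq_block_deriv K1 K2 K4 X (0\<^sub>m n n) = 0\<^sub>m n n"
    unfolding HJ_sq_block_deriv_def using assms by (intro eq_matI) auto
  moreover have E: "adj_inverse (M_block K1 K2 K4 X eps) \<in> carrier_mat n n"
    by (rule adj_inverse_carrier[OF M_block_carrier[OF assms]])
  ultimately show ?thesis
    unfolding inverse_M_block_deriv_def by (simp add: right_mult_zero_mat[OF E] left_mult_zero_mat[OF E])
qed

lemma index_Amat_mult_vec:
  assumes v: "v \<in> carrier_vec (2*n)" and k: "k < 2*n"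
  shows "(Amat n *\<^sub>v v) $ k = v $ (if k < n then Suc k mod n else n + Suc (k - n) mod n)"
proof -
  define s where "s = (if k < n then Suc k mod n else n + Suc (k - n) mod n)"
  have n: "0 < n" using k by simp
  have s: "s < 2*n"
  proof (cases "k < n")
    case True
    then show ?thesis
      using mod_less_divisor[OF n, of "Suc k"] unfolding s_def if_P[OF True] by linarith
  next
    case False
    then show ?thesis
      using mod_less_divisor[OF n, of "Suc (k - n)"] unfolding s_def if_not_P[OF False] by linarith
  qed
  have A: "Amat n $$ (k,l) = (if l = s then 1 else 0)" if "l < 2*n" for l
    using k that n by (auto simp: Amat_def s_def index_Pshift)
  have "(Amat n *\<^sub>v v) $ k = (\<Sum>l<2*n. Amat n $$ (k,l) * v $ l)"
    using v k by (simp add: scalar_prod_def atLeast0LessThan carrier_matD[OF Amat_carrier])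
  also have "\<dots> = (\<Sum>l<2*n. if l = s then v $ l else 0)"
    by (rule sum.cong) (auto simp: A)
  also have "\<dots> = v $ s"
    using s by simp
  finally show ?thesis
    unfolding s_def .
qed

lemma Amat_mult_vec_row_shift:
  assumes shift: "\<And>k. k < n \<Longrightarrow> D (Suc k mod n) = D k * Pshift n"
    and high: "\<And>k. n \<le> k \<Longrightarrow> D k = 0\<^sub>m n n"
    and D: "\<And>k. D k \<in> carrier_mat n n"
    and i: "0 < i" "i < n" and k: "k < 2*n"
  shows "(Amat n *\<^sub>v vec (2*n) (\<lambda>l. D l $$ (0,i))) $ k = D k $$ (0, i - 1)"
proof (cases "k < n")
  case True
  have n: "0 < n" using i by simp
  have "Suc k mod n < 2*n"
    using mod_less_divisor[OF n, of "Suc k"] by linarith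
  then have "(Amat n *\<^sub>v vec (2*n) (\<lambda>l. D l $$ (0,i))) $ k = D (Suc k mod n) $$ (0,i)"
    using True k by (simp add: index_Amat_mult_vec)
  also have "\<dots> = D k $$ (0, residue n (int i - 1))"
    using True i n by (simp add: shift index_mult_Pshift[OF D])
  also have "residue n (int i - 1) = i - 1"
    using i by (simp add: residue_eq_iff of_nat_diff)
  finally show ?thesis .
next
  case False
  have "(Amat n *\<^sub>v vec (2*n) (\<lambda>l. D l $$ (0,i))) $ k = D (n + Suc (k - n) mod n) $$ (0,i)"
    using False k mod_less_divisor[of n "Suc (k - n)"] by (simp add: index_Amat_mult_vec)
  also have "\<dots> = 0"
    using i by (simp add: high)
  also have "\<dots> = D k $$ (0, i - 1)"
    using False i by (simp add: high)
  finally show ?thesis .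
qed

lemma has_real_derivative_inverse_M_block_partial:
  assumes K: "K1 \<in> carrier_mat n n" "K2 \<in> carrier_mat n n" "K4 \<in> carrier_mat n n"
    and x: "x \<in> carrier_vec (2*n)" and d: "det (M_block K1 K2 K4 (Xmat n x) eps) \<noteq> 0"
    and k: "k < 2*n" and j: "j < n"
  shows "((\<lambda>t. adj_inverse (M_block K1 K2 K4 (Xmat n (x + t \<cdot>\<^sub>v unit_vec (2*n) k)) eps) $$ (0,j))
      has_real_derivative inverse_M_block_deriv K1 K2 K4 (Xmat n x) eps (Xmat n (unit_vec (2*n) k)) $$ (0,j)) (at 0)"
proof -
  let ?S = "Xmat n (unit_vec (2*n) k)"
  have "has_mat_derivative (\<lambda>t. adj_inverse (M_block K1 K2 K4 (Xmat n x + t \<cdot>\<^sub>m ?S) eps))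
      (inverse_M_block_deriv K1 K2 K4 (Xmat n x) eps ?S) 0"
    by (rule has_mat_derivative_inverse_M_block[OF K Xmat_carrier Xmat_carrier d])
  from has_mat_derivative_index[OF this, of 0 j]
  show ?thesis
    using x j carrier_matD[OF inverse_M_block_deriv_carrier[OF K Xmat_carrier Xmat_carrier]]
    by (simp add: Xmat_add_smult)
qed

lemma has_gradient_inverse_M_block_shift:
  assumes K: "anticirculant n K1" "anticirculant n K2" "anticirculant n K4"
    and x: "x \<in> carrier_vec (2*n)" and d: "det (M_block K1 K2 K4 (Xmat n x) eps) \<noteq> 0"
    and i: "0 < i" "i < n"
  shows "\<exists>g. has_gradient (\<lambda>y. adj_inverse (M_block K1 K2 K4 (Xmat n y) eps) $$ (0,i)) (2*n) x g
    \<and> has_gradient (\<lambda>y. adj_inverse (M_block K1 K2 K4 (Xmat n y) eps) $$ (0, i - 1)) (2*n) x (Amat n *\<^sub>v g)"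
proof -
  have Kc: "K1 \<in> carrier_mat n n" "K2 \<in> carrier_mat n n" "K4 \<in> carrier_mat n n"
    using K by (auto simp: anticirculant_carrier)
  define D where "D k = inverse_M_block_deriv K1 K2 K4 (Xmat n x) eps (Xmat n (unit_vec (2*n) k))" for k
  have partial: "((\<lambda>t. adj_inverse (M_block K1 K2 K4 (Xmat n (x + t \<cdot>\<^sub>v unit_vec (2*n) k)) eps) $$ (0,j))
      has_real_derivative D k $$ (0,j)) (at 0)" if "k < 2*n" "j < n" for k j
    unfolding D_def by (rule has_real_derivative_inverse_M_block_partial[OF Kc x d that])
  have m: "n \<le> 2*n" by simp
  have shift: "D (Suc k mod n) = D k * Pshift n" if "k < n" for k
    unfolding D_def Xmat_unit_vec_Suc_mod[OF that m]
    by (rule inverse_M_block_deriv_mult_Pshift[OF K Xmat_anticirculant Xmat_carrier d])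
  have high: "D k = 0\<^sub>m n n" if "n \<le> k" for k
    unfolding D_def Xmat_unit_vec_ge[OF that m] by (rule inverse_M_block_deriv_zero[OF Kc Xmat_carrier])
  have Dc: "D k \<in> carrier_mat n n" for k
    unfolding D_def by (rule inverse_M_block_deriv_carrier[OF Kc Xmat_carrier Xmat_carrier])
  define g where "g = vec (2*n) (\<lambda>k. D k $$ (0,i))"
  have "has_gradient (\<lambda>y. adj_inverse (M_block K1 K2 K4 (Xmat n y) eps) $$ (0,i)) (2*n) x g"
    using partial i by (simp add: has_gradient_def g_def)
  moreover have "has_gradient (\<lambda>y. adj_inverse (M_block K1 K2 K4 (Xmat n y) eps) $$ (0, i - 1)) (2*n) x (Amat n *\<^sub>v g)"
    using partial i Amat_mult_vec_row_shift[of n D, OF shift high Dc i]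
    by (simp add: has_gradient_def g_def carrier_matD[OF Amat_carrier])
  ultimately show ?thesis
    by blast
qed

lemma is_inverse_of_block_diag:
  assumes E: "E \<in> carrier_mat n n" and C: "C \<in> carrier_mat n n"
    and "E * C = 1\<^sub>m n" "C * E = 1\<^sub>m n"
  shows "is_inverse_of (four_block_mat E (0\<^sub>m n n) (0\<^sub>m n n) E) (four_block_mat C (0\<^sub>m n n) (0\<^sub>m n n) (C :: real mat))"
proof -
  have "four_block_mat E (0\<^sub>m n n) (0\<^sub>m n n) E * four_block_mat C (0\<^sub>m n n) (0\<^sub>m n n) C = 1\<^sub>m (n + n)"
    using assms by (subst mult_four_block_mat[OF E _ _ E C _ _ C]) auto
  moreover have "four_block_mat C (0\<^sub>m n n) (0\<^sub>m n n) C * four_block_mat E (0\<^sub>m n n) (0\<^sub>m n n) E = 1\<^sub>m (n + n)"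
    using assms by (subst mult_four_block_mat[OF C _ _ C E _ _ E]) auto
  ultimately show ?thesis
    using E C by (simp add: is_inverse_of_def inverts_mat_def)
qed

lemma is_inverse_ofD:
  assumes "is_inverse_of B M" "M \<in> carrier_mat m m"
  shows "B \<in> carrier_mat m m" "B * M = 1\<^sub>m m" "M * B = 1\<^sub>m m"
proof -
  have MB: "M * B = 1\<^sub>m m" and BM: "B * M = 1\<^sub>m (dim_row B)"
    using assms(1) carrier_matD[OF assms(2)] unfolding is_inverse_of_def inverts_mat_def by simp_all
  have "dim_col B = m"
    using arg_cong[OF MB, of dim_col] by simp
  moreover have "dim_row B = m"
    using arg_cong[OF BM, of dim_col] carrier_matD[OF assms(2)] by simp
  ultimately show "B \<in> carrier_mat m m"
    unfolding carrier_mat_def by simp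
  show "B * M = 1\<^sub>m m"
    using BM unfolding \<open>dim_row B = m\<close> .
  show "M * B = 1\<^sub>m m"
    by (rule MB)
qed

lemma is_inverse_of_unique:
  assumes M: "M \<in> carrier_mat m m" and "is_inverse_of B1 M" "is_inverse_of B2 (M :: real mat)"
  shows "B1 = B2"
proof -
  note B1 = is_inverse_ofD[OF assms(2) M] and B2 = is_inverse_ofD[OF assms(3) M]
  have "B1 = B1 * (M * B2)"
    unfolding B2(3) by (rule right_mult_one_mat[OF B1(1), symmetric])
  also have "\<dots> = (B1 * M) * B2"
    by (rule assoc_mult_mat[OF B1(1) M B2(1), symmetric])
  also have "\<dots> = B2"
    unfolding B1(2) by (rule left_mult_one_mat[OF B2(1)])
  finally show ?thesis .
qed

lemma det_nonzero_if_invertible_block_diag: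
  assumes C: "C \<in> carrier_mat n n"
    and inv: "invertible_mat (four_block_mat C (0\<^sub>m n n) (0\<^sub>m n n) (C :: real mat))"
  shows "det C \<noteq> 0"
proof -
  let ?M = "four_block_mat C (0\<^sub>m n n) (0\<^sub>m n n) C"
  have M: "?M \<in> carrier_mat (n + n) (n + n)"
    by (rule four_block_carrier_mat[OF C C])
  obtain B where "is_inverse_of B ?M"
    using inv unfolding invertible_mat_def is_inverse_of_def by blast
  note B = is_inverse_ofD[OF this M]
  have "det ?M * det B = 1"
    using det_mult[OF M B(1)] unfolding B(3) by simp
  moreover have "det ?M = det C * det C"
    by (rule det_four_block_mat_lower_left_zero[OF C zero_carrier_mat refl C])
  ultimately show ?thesis
    by auto
qed

lemma pow_comb_Amat_coeff:
  assumes "pow_comb c (Amat n) n = pow_comb c' (Amat n) n" "i < n"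
  shows "c i = c' i"
proof -
  have "circ_mat n c = circ_mat n c'"
    using assms(1) unfolding pow_comb_Amat by (rule four_block_mat_inject[THEN conjunct1]) auto
  then show ?thesis
    using index_circ_mat_first_row[OF assms(2)] by metis
qed

lemma pow_comb_Amat_inverse_unique:
  assumes "is_inverse_of (pow_comb c (Amat n) n) M" "is_inverse_of (pow_comb c' (Amat n) n) M" "i < n"
  shows "c i = c' i"
proof -
  have B: "pow_comb c (Amat n) n \<in> carrier_mat (n + n) (n + n)"
    unfolding pow_comb_Amat by (rule four_block_carrier_mat) auto
  have MB: "M * pow_comb c (Amat n) n = 1\<^sub>m (dim_row M)"
    and BM: "pow_comb c (Amat n) n * M = 1\<^sub>m (n + n)"
    using assms(1) carrier_matD[OF B] by (simp_all add: is_inverse_of_def inverts_mat_def)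
  have "dim_row M = n + n" "dim_col M = n + n"
    using arg_cong[OF MB, of dim_col] arg_cong[OF BM, of dim_col] carrier_matD[OF B] by simp_all
  then have "M \<in> carrier_mat (n + n) (n + n)"
    unfolding carrier_mat_def by simp
  then show ?thesis
    by (rule pow_comb_Amat_coeff[OF is_inverse_of_unique[OF _ assms(1,2)] assms(3)])
qed

lemma inverse_Mmat_eq_pow_comb:
  assumes K: "anticirculant n K1" "anticirculant n K2" "anticirculant n K4"
    and H: "H = four_block_mat K1 K2 K2 K4" and inv: "invertible_mat (Mmat n H x eps)"
  shows "det (M_block K1 K2 K4 (Xmat n x) eps) \<noteq> 0"
    and "is_inverse_of (pow_comb (\<lambda>i. adj_inverse (M_block K1 K2 K4 (Xmat n x) eps) $$ (0,i)) (Amat n) n)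
      (Mmat n H x eps)"
proof -
  let ?C = "M_block K1 K2 K4 (Xmat n x) eps"
  have C: "?C \<in> carrier_mat n n"
    using K by (intro M_block_carrier) (auto simp: anticirculant_carrier)
  have M: "Mmat n H x eps = four_block_mat ?C (0\<^sub>m n n) (0\<^sub>m n n) ?C"
    by (rule Mmat_eq_block_diag[OF K H])
  show d: "det ?C \<noteq> 0"
    using det_nonzero_if_invertible_block_diag[OF C] inv unfolding M .
  have E: "circulant n (adj_inverse ?C)"
    by (rule circulant_inverse[OF circulant_M_block[OF K Xmat_anticirculant]
          adj_inverse_carrier[OF C] adj_inverse_mult[OF C d]])
  have "pow_comb (\<lambda>i. adj_inverse ?C $$ (0,i)) (Amat n) n
      = four_block_mat (adj_inverse ?C) (0\<^sub>m n n) (0\<^sub>m n n) (adj_inverse ?C)"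
    unfolding pow_comb_Amat circ_mat_first_row[OF E] ..
  then show "is_inverse_of (pow_comb (\<lambda>i. adj_inverse ?C $$ (0,i)) (Amat n) n) (Mmat n H x eps)"
    unfolding M by (simp add: is_inverse_of_block_diag[OF adj_inverse_carrier[OF C] C adj_inverse_mult[OF C d]])
qed

theorem mainTheorem20:
  fixes n :: nat and H :: "real mat"
  assumes "n \<ge> 2"
    and "admissible_hessian n H"
  shows "\<exists>r :: nat \<Rightarrow> real vec \<Rightarrow> real \<Rightarrow> real.
     (\<forall>x eps. x \<in> carrier_vec (2*n) \<and> invertible_mat (Mmat n H x eps) \<longrightarrow>
        is_inverse_of (pow_comb (\<lambda>i. r i x eps) (Amat n) n) (Mmat n H x eps)
        \<and> (\<forall>c. is_inverse_of (pow_comb c (Amat n) n) (Mmat n H x eps)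
                 \<longrightarrow> (\<forall>i<n. c i = r i x eps))
        \<and> (\<forall>i\<in>{1..<n}. \<exists>g. has_gradient (\<lambda>y. r i y eps) (2*n) x g
                 \<and> has_gradient (\<lambda>y. r (i - 1) y eps) (2*n) x (Amat n *\<^sub>v g)))"
proof -
  obtain K1 K2 K4 where K: "anticirculant n K1" "anticirculant n K2" "anticirculant n K4"
    and H: "H = four_block_mat K1 K2 K2 K4"
    using admissible_hessian_blocks[OF assms(2)] by blast
  define r where "r i y eps = adj_inverse (M_block K1 K2 K4 (Xmat n y) eps) $$ (0,i)" for i y eps
  have "is_inverse_of (pow_comb (\<lambda>i. r i x eps) (Amat n) n) (Mmat n H x eps)
      \<and> (\<forall>c. is_inverse_of (pow_comb c (Amat n) n) (Mmat n H x eps) \<longrightarrow> (\<forall>i<n. c i = r i x eps))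
      \<and> (\<forall>i\<in>{1..<n}. \<exists>g. has_gradient (\<lambda>y. r i y eps) (2*n) x g
          \<and> has_gradient (\<lambda>y. r (i - 1) y eps) (2*n) x (Amat n *\<^sub>v g))"
    if x: "x \<in> carrier_vec (2*n)" and inv: "invertible_mat (Mmat n H x eps)" for x eps
  proof -
    note inverse = inverse_Mmat_eq_pow_comb[OF K H inv]
    have r_inv: "is_inverse_of (pow_comb (\<lambda>i. r i x eps) (Amat n) n) (Mmat n H x eps)"
      unfolding r_def by (rule inverse(2))
    show ?thesis
    proof (intro conjI allI impI ballI r_inv)
      fix c i assume "is_inverse_of (pow_comb c (Amat n) n) (Mmat n H x eps)" "i < n"
      then show "c i = r i x eps"
        by (rule pow_comb_Amat_inverse_unique[OF _ r_inv])
    next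
      fix i assume "i \<in> {1..<n}"
      then show "\<exists>g. has_gradient (\<lambda>y. r i y eps) (2*n) x g \<and> has_gradient (\<lambda>y. r (i - 1) y eps) (2*n) x (Amat n *\<^sub>v g)"
        unfolding r_def using has_gradient_inverse_M_block_shift[OF K x inverse(1)] by simp
    qed
  qed
  then show ?thesis
    by blast
qed

end
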